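(* For every integer $n\ge2$, the Higman–Thompson group $V_n$ is generated by four involutions.
   Context: For $n\ge2$ let $n^*$ be the set of finite words over $\{0,\dots,n-1\}$ (the rooted $n$-ary tree). Let $\mathfrak T_n$ be the set of finite rooted subtrees $\tau\subseteq n^*$ closed under prefixes, containing the empty word, and such that for each word $\alpha$, either all or none of $\alpha0,\dots,\alpha(n-1)$ lie in $\tau$; $\mathrm{Lea}(\tau)$ is its set of leaves. For $\tau_0,\tau_1\in\mathfrak T_n$ with the same number of leaves, a bijection $b\colon\mathrm{Lea}(\tau_0)\to\mathrm{Lea}(\tau_1)$ induces the bijection $\alpha\gamma\mapsto b(\alpha)\gamma$ between cofinite subsets of $n^*$. $V_n$ is the group of such bijections modulo equality on a cofinite subset of $n^*$, under composition (this is Higman's $G_{n,1}$; $V_2$ is Thompson's group $V$). *)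

theory Defs
  imports "HOL-Algebra.Generated_Groups"
begin

text \<open>Words over the alphabet {0,...,n-1}: the rooted n-ary tree n*.\<close>
definition words :: "nat \<Rightarrow> nat list set" where
  "words n = {w. set w \<subseteq> {..<n}}"

definition is_tree :: "nat \<Rightarrow> nat list set \<Rightarrow> bool" where
  "is_tree n \<tau> \<longleftrightarrow> finite \<tau> \<and> \<tau> \<subseteq> words n \<and> [] \<in> \<tau>
     \<and> (\<forall>\<alpha> \<beta>. \<alpha> @ \<beta> \<in> \<tau> \<longrightarrow> \<alpha> \<in> \<tau>)
     \<and> (\<forall>\<alpha>. (\<forall>i<n. \<alpha> @ [i] \<in> \<tau>) \<or> (\<forall>i<n. \<alpha> @ [i] \<notin> \<tau>))"

definition leaves :: "nat \<Rightarrow> nat list set \<Rightarrow> nat list set" where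
  "leaves n \<tau> = {\<alpha> \<in> \<tau>. \<forall>i<n. \<alpha> @ [i] \<notin> \<tau>}"

text \<open>The prefix-replacement map alpha gamma |-> b(alpha) gamma induced by b on the leaves of tau0,
  extended by the identity outside its (cofinite) domain.\<close>
definition pmap :: "nat \<Rightarrow> nat list set \<Rightarrow> (nat list \<Rightarrow> nat list) \<Rightarrow> nat list \<Rightarrow> nat list" where
  "pmap n \<tau>0 b w =
     (if \<exists>\<alpha>\<in>leaves n \<tau>0. \<exists>\<gamma>. w = \<alpha> @ \<gamma>
      then (let \<alpha> = (THE \<alpha>. \<alpha> \<in> leaves n \<tau>0 \<and> (\<exists>\<gamma>. w = \<alpha> @ \<gamma>))
            in b \<alpha> @ drop (length \<alpha>) w)
      else w)"

definition V_maps :: "nat \<Rightarrow> (nat list \<Rightarrow> nat list) set" where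
  "V_maps n = {pmap n \<tau>0 b | \<tau>0 \<tau>1 b. is_tree n \<tau>0 \<and> is_tree n \<tau>1
                  \<and> bij_betw b (leaves n \<tau>0) (leaves n \<tau>1)}"

definition germ_eq :: "nat \<Rightarrow> (nat list \<Rightarrow> nat list) \<Rightarrow> (nat list \<Rightarrow> nat list) \<Rightarrow> bool" where
  "germ_eq n f g \<longleftrightarrow> finite {w \<in> words n. f w \<noteq> g w}"

definition germ :: "nat \<Rightarrow> (nat list \<Rightarrow> nat list) \<Rightarrow> (nat list \<Rightarrow> nat list) set" where
  "germ n f = {g. germ_eq n f g}"

definition Vgroup :: "nat \<Rightarrow> (nat list \<Rightarrow> nat list) set monoid" where
  "Vgroup n = \<lparr> carrier = germ n ` V_maps n,
               mult = (\<lambda>X Y. germ n ((SOME f. f \<in> X) \<circ> (SOME g. g \<in> Y))),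
               one = germ n id \<rparr>"

end

theory Submission
  imports Defs "HOL-Library.Sublist" "HOL-Combinatorics.Permutations"
begin

text \<open>Every element of \<open>V\<^sub>n\<close> is the germ of a permutation of \<open>n\<^sup>*\<close> that commutes with appending
  letters away from finitely many vertices, and by induction on tree pairs every such permutation
  is a product of permutations of the cones below a finite prefix antichain, hence of swaps of
  two incomparable cones. So it suffices that the subgroup generated by the four involutions
  contains every cone swap. The two reflections of the lexicographic order of the third level
  multiply to the shift of that order, so conjugating the swap of \<open>[0, 0, 0]\<close> and \<open>[0, 0, 1]\<close> gives
  all swaps, hence all permutations, of the third level. Conjugating the swap of \<open>[0, 0]\<close> and
  \<open>[1, 0, 0]\<close> by these, and splitting a swap into swaps of children, gives all swaps of cones of
  depth at most 3; finally a swap involving a deeper cone is conjugate, by a swap of cones of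
  depth at most 3, to a swap of cones of smaller total depth.\<close>

(* HOL-Algebra's group inverse notation would capture \<open>inv f\<close> for maps *)
no_notation m_inv (\<open>(\<open>open_block notation=\<open>prefix inv\<close>\<close>inv\<index> _)\<close> [81] 80)

section \<open>Words and prefix antichains\<close>

lemma words_append [simp]: "xs @ ys \<in> words n \<longleftrightarrow> xs \<in> words n \<and> ys \<in> words n"
  by (auto simp: words_def)

lemma words_Nil [simp]: "[] \<in> words n"
  by (auto simp: words_def)

lemma words_Cons [simp]: "x # xs \<in> words n \<longleftrightarrow> x < n \<and> xs \<in> words n"
  by (auto simp: words_def)

lemma words_drop: "w \<in> words n \<Longrightarrow> drop k w \<in> words n"
  by (auto simp: words_def dest: in_set_dropD)

lemma words_take: "w \<in> words n \<Longrightarrow> take k w \<in> words n"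
  by (auto simp: words_def dest: in_set_takeD)

lemma words_prefix: "prefix a w \<Longrightarrow> w \<in> words n \<Longrightarrow> a \<in> words n"
  by (auto simp: prefix_def)

lemma replicate_zero_words: "0 < n \<Longrightarrow> replicate k 0 \<in> words n"
  by (auto simp: words_def)

lemma finite_words_le: "finite {w \<in> words n. length w \<le> N}"
proof -
  have "{w \<in> words n. length w \<le> N} = {xs. set xs \<subseteq> {..<n} \<and> length xs \<le> N}"
    by (auto simp: words_def)
  then show ?thesis using finite_lists_length_le[of "{..<n}" N] by simp
qed

definition prefix_antichain :: "'a list set \<Rightarrow> bool" where
  "prefix_antichain A \<longleftrightarrow> (\<forall>a\<in>A. \<forall>b\<in>A. prefix a b \<longrightarrow> a = b)"

lemma prefix_antichain_unique:
  "prefix_antichain A \<Longrightarrow> a \<in> A \<Longrightarrow> b \<in> A \<Longrightarrow> prefix a w \<Longrightarrow> prefix b w \<Longrightarrow> a = b"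
  unfolding prefix_antichain_def by (metis prefix_same_cases)

lemma prefix_antichain_parallel:
  "prefix_antichain A \<Longrightarrow> a \<in> A \<Longrightarrow> b \<in> A \<Longrightarrow> a \<noteq> b \<Longrightarrow> a \<parallel> b"
  unfolding prefix_antichain_def parallel_def by blast

lemma parallel_prefix_antichain: "u \<parallel> v \<Longrightarrow> prefix_antichain {u, v}"
  by (auto simp: parallel_def prefix_antichain_def)

lemma parallel_append_left: "u \<parallel> v \<Longrightarrow> \<not> prefix v (u @ g)"
  unfolding parallel_def by (metis prefix_same_cases prefixI)

section \<open>Cone permutations\<close>

definition cone_perm :: "nat \<Rightarrow> nat list set \<Rightarrow> (nat list \<Rightarrow> nat list) \<Rightarrow> nat list \<Rightarrow> nat list" where
  "cone_perm n A \<pi> w = (if w \<in> words n \<and> (\<exists>a\<in>A. prefix a w)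
     then (let a = (THE a. a \<in> A \<and> prefix a w) in \<pi> a @ drop (length a) w) else w)"

lemma cone_perm_prefix:
  assumes "prefix_antichain A" "a \<in> A" "prefix a w" "w \<in> words n"
  shows "cone_perm n A \<pi> w = \<pi> a @ drop (length a) w"
proof -
  have "(THE a. a \<in> A \<and> prefix a w) = a"
    using assms by (blast intro: the_equality dest: prefix_antichain_unique)
  then show ?thesis using assms unfolding cone_perm_def by (auto simp: Let_def)
qed

lemma cone_perm_cone:
  "prefix_antichain A \<Longrightarrow> a \<in> A \<Longrightarrow> a @ g \<in> words n \<Longrightarrow> cone_perm n A \<pi> (a @ g) = \<pi> a @ g"
  by (simp add: cone_perm_prefix)

lemma cone_perm_outside: "\<not> (\<exists>a\<in>A. prefix a w) \<Longrightarrow> cone_perm n A \<pi> w = w"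
  unfolding cone_perm_def by auto

lemma cone_perm_non_word: "w \<notin> words n \<Longrightarrow> cone_perm n A \<pi> w = w"
  unfolding cone_perm_def by auto

lemma cone_perm_cases [consumes 1, case_names outside cone]:
  assumes "prefix_antichain A"
  obtains (outside) "cone_perm n A \<pi> w = w" "w \<notin> words n \<or> \<not> (\<exists>a\<in>A. prefix a w)"
  | (cone) a g where "a \<in> A" "w = a @ g" "g \<in> words n" "a \<in> words n" "cone_perm n A \<pi> w = \<pi> a @ g"
proof (cases "w \<in> words n \<and> (\<exists>a\<in>A. prefix a w)")
  case True
  then obtain a g where "a \<in> A" "w = a @ g" by (auto simp: prefix_def)
  with True assms show ?thesis by (intro cone) (auto simp: cone_perm_cone)
next
  case False
  then show ?thesis using outside cone_perm_outside cone_perm_non_word by blast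
qed

lemma cone_perm_cong:
  assumes "prefix_antichain A" and "\<And>a. a \<in> A \<Longrightarrow> \<pi> a = \<rho> a"
  shows "cone_perm n A \<pi> = cone_perm n A \<rho>"
proof
  fix w show "cone_perm n A \<pi> w = cone_perm n A \<rho> w"
    using assms(1)
  proof (cases rule: cone_perm_cases[where w=w and n=n and \<pi>=\<pi>])
    case outside
    then show ?thesis using cone_perm_outside cone_perm_non_word by metis
  next
    case (cone a g)
    then show ?thesis using assms by (simp add: cone_perm_cone)
  qed
qed

lemma cone_perm_ident: "prefix_antichain A \<Longrightarrow> cone_perm n A (\<lambda>x. x) = id"
proof
  fix w assume "prefix_antichain A"
  then show "cone_perm n A (\<lambda>x. x) w = id w"
    by (cases rule: cone_perm_cases[where w=w and n=n and \<pi>="\<lambda>x. x"]) auto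
qed

lemma cone_perm_comp:
  assumes "prefix_antichain A" and "A \<subseteq> words n" and "\<rho> ` A \<subseteq> A"
  shows "cone_perm n A \<pi> (cone_perm n A \<rho> w) = cone_perm n A (\<pi> \<circ> \<rho>) w"
  using assms(1)
proof (cases rule: cone_perm_cases[where w=w and n=n and \<pi>=\<rho>])
  case outside
  then show ?thesis using cone_perm_outside cone_perm_non_word by metis
next
  case (cone a g)
  then have "\<rho> a \<in> A" "\<rho> a @ g \<in> words n" using assms by auto
  then show ?thesis using cone assms(1) by (simp add: cone_perm_cone)
qed

lemma cone_perm_words:
  "prefix_antichain A \<Longrightarrow> A \<subseteq> words n \<Longrightarrow> \<pi> ` A \<subseteq> A \<Longrightarrow> w \<in> words n \<Longrightarrow> cone_perm n A \<pi> w \<in> words n"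
  by (cases rule: cone_perm_cases[where A=A and w=w and n=n and \<pi>=\<pi>]) auto

lemma cone_perm_restrict:
  assumes A: "prefix_antichain A" and BA: "B \<subseteq> A" and fixed: "\<And>a. a \<in> A - B \<Longrightarrow> \<pi> a = a"
  shows "cone_perm n A \<pi> = cone_perm n B \<pi>"
proof
  fix w
  have B: "prefix_antichain B" using A BA by (auto simp: prefix_antichain_def)
  show "cone_perm n A \<pi> w = cone_perm n B \<pi> w"
    using A
  proof (cases rule: cone_perm_cases[where w=w and n=n and \<pi>=\<pi>])
    case outside
    then show ?thesis using BA cone_perm_outside cone_perm_non_word by (metis subsetD)
  next
    case (cone a g)
    show ?thesis
    proof (cases "a \<in> B")
      case True then show ?thesis using cone B by (simp add: cone_perm_cone)
    next
      case False
      have "\<not> (\<exists>b\<in>B. prefix b w)"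
      proof
        assume "\<exists>b\<in>B. prefix b w"
        then obtain b where "b \<in> A" "b \<in> B" "prefix b w" using BA by auto
        moreover have "prefix a w" using cone(2) by simp
        ultimately show False using False cone(1) prefix_antichain_unique[OF A] by metis
      qed
      then show ?thesis using cone False fixed cone_perm_outside by auto
    qed
  qed
qed


section \<open>Representatives of elements of \<open>V\<^sub>n\<close>\<close>

definition defects :: "nat \<Rightarrow> (nat list \<Rightarrow> nat list) \<Rightarrow> nat list set" where
  "defects n f = {w \<in> words n. \<exists>i<n. f (w @ [i]) \<noteq> f w @ [i]}"

text \<open>Every element of \<open>V\<^sub>n\<close> is the germ of a representative (\<open>carrier_Vgroup\<close>), and unlike the
  maps \<open>pmap\<close> of the definition, representatives are closed under composition and inversion.\<close>
definition V_rep :: "nat \<Rightarrow> (nat list \<Rightarrow> nat list) \<Rightarrow> bool" where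
  "V_rep n f \<longleftrightarrow> f permutes words n \<and> finite (defects n f)"

lemma V_rep_permutes: "V_rep n f \<Longrightarrow> f permutes words n"
  by (simp add: V_rep_def)

lemma V_rep_bij: "V_rep n f \<Longrightarrow> bij f"
  using permutes_bij V_rep_permutes by blast

lemma V_rep_words_iff: "V_rep n f \<Longrightarrow> f w \<in> words n \<longleftrightarrow> w \<in> words n"
  by (simp add: V_rep_def permutes_in_image)

lemma V_rep_inverses: "V_rep n f \<Longrightarrow> f (inv f w) = w" "V_rep n f \<Longrightarrow> inv f (f w) = w"
  using permutes_inverses V_rep_permutes by metis+

lemma V_rep_id: "V_rep n id"
  by (simp add: V_rep_def defects_def)

lemma V_rep_comp:
  assumes f: "V_rep n f" and g: "V_rep n g"
  shows "V_rep n (f \<circ> g)"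
proof -
  have "defects n (f \<circ> g) \<subseteq> defects n g \<union> inv g ` defects n f"
  proof
    fix w assume "w \<in> defects n (f \<circ> g)"
    then obtain i where i: "i < n" "f (g (w @ [i])) \<noteq> f (g w) @ [i]" and w: "w \<in> words n"
      by (auto simp: defects_def)
    show "w \<in> defects n g \<union> inv g ` defects n f"
    proof (cases "g (w @ [i]) = g w @ [i]")
      case True
      then have "g w \<in> defects n f" using i w V_rep_words_iff[OF g] by (auto simp: defects_def)
      then show ?thesis using V_rep_inverses(2)[OF g, of w] by (metis UnI2 imageI)
    next
      case False
      then show ?thesis using i w by (auto simp: defects_def)
    qed
  qed
  then have "finite (defects n (f \<circ> g))"
    using f g by (auto simp: V_rep_def intro: finite_subset)
  then show ?thesis using f g by (simp add: V_rep_def permutes_compose)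
qed

lemma V_rep_inv:
  assumes f: "V_rep n f"
  shows "V_rep n (inv f)"
proof -
  have "defects n (inv f) \<subseteq> f ` defects n f"
  proof
    fix w assume "w \<in> defects n (inv f)"
    then obtain i where i: "i < n" "inv f (w @ [i]) \<noteq> inv f w @ [i]" and w: "w \<in> words n"
      by (auto simp: defects_def)
    let ?z = "inv f w"
    have "f (?z @ [i]) \<noteq> f ?z @ [i]"
    proof
      assume "f (?z @ [i]) = f ?z @ [i]"
      then have "inv f (w @ [i]) = ?z @ [i]"
        using V_rep_inverses[OF f, of w] V_rep_inverses(2)[OF f, of "?z @ [i]"] by simp
      then show False using i by simp
    qed
    moreover have "?z \<in> words n" using w V_rep_words_iff[OF f, of ?z] V_rep_inverses(1)[OF f] by simp
    ultimately have "?z \<in> defects n f" using i by (auto simp: defects_def)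
    then show "w \<in> f ` defects n f" using V_rep_inverses(1)[OF f, of w] by (metis imageI)
  qed
  then show ?thesis
    using f by (auto simp: V_rep_def permutes_inv intro: finite_subset)
qed

lemma V_rep_cone_perm:
  assumes fin: "finite A" and sub: "A \<subseteq> words n" and ac: "prefix_antichain A"
    and p: "bij_betw \<pi> A A"
  shows "V_rep n (cone_perm n A \<pi>)"
proof -
  let ?f = "cone_perm n A \<pi>" and ?q = "inv_into A \<pi>"
  have pA: "\<pi> ` A \<subseteq> A" using p by (simp add: bij_betw_def)
  have qA: "?q ` A \<subseteq> A" using bij_betw_inv_into[OF p] by (simp add: bij_betw_def)
  have "cone_perm n A (?q \<circ> \<pi>) = cone_perm n A (\<lambda>x. x)"
    by (rule cone_perm_cong[OF ac]) (use p in \<open>simp add: bij_betw_imp_inj_on inv_into_f_f\<close>)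
  then have "cone_perm n A ?q (?f w) = w" for w
    using cone_perm_comp[OF ac sub pA, of ?q w] cone_perm_ident[OF ac] by simp
  moreover have "cone_perm n A (\<pi> \<circ> ?q) = cone_perm n A (\<lambda>x. x)"
    by (rule cone_perm_cong[OF ac]) (use p in \<open>simp add: bij_betw_imp_surj_on f_inv_into_f\<close>)
  then have "?f (cone_perm n A ?q w) = w" for w
    using cone_perm_comp[OF ac sub qA, of \<pi> w] cone_perm_ident[OF ac] by simp
  ultimately have "bij_betw ?f (words n) (words n)"
    using cone_perm_words[OF ac sub pA] cone_perm_words[OF ac sub qA]
    by (intro bij_betw_byWitness[where f'="cone_perm n A ?q"]) auto
  then have perm: "?f permutes words n"
    by (rule bij_imp_permutes) (rule cone_perm_non_word)
  have "defects n ?f \<subseteq> butlast ` A"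
  proof
    fix w assume "w \<in> defects n ?f"
    then obtain i where i: "i < n" "?f (w @ [i]) \<noteq> ?f w @ [i]" and w: "w \<in> words n"
      by (auto simp: defects_def)
    have no_prefix: "\<not> (\<exists>a\<in>A. prefix a w)"
    proof
      assume "\<exists>a\<in>A. prefix a w"
      then obtain a where a: "a \<in> A" "prefix a w" by auto
      then have "?f (w @ [i]) = ?f w @ [i]"
        using cone_perm_prefix[OF ac a] cone_perm_prefix[OF ac a(1), of "w @ [i]"] w i
        by (auto simp: prefix_def)
      then show False using i by simp
    qed
    then have "?f (w @ [i]) \<noteq> w @ [i]" using i cone_perm_outside by metis
    then have "\<exists>a\<in>A. prefix a (w @ [i])" by (meson cone_perm_outside)
    then have "w @ [i] \<in> A" using no_prefix by (auto simp: prefix_snoc)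
    then show "w \<in> butlast ` A" by (metis butlast_snoc image_eqI)
  qed
  then show ?thesis using fin perm by (auto simp: V_rep_def intro: finite_subset)
qed


section \<open>Germs\<close>

lemma germ_eq_refl: "germ_eq n f f"
  by (simp add: germ_eq_def)

lemma germ_eq_sym: "germ_eq n f g \<Longrightarrow> germ_eq n g f"
proof -
  have "{w \<in> words n. g w \<noteq> f w} = {w \<in> words n. f w \<noteq> g w}" by auto
  then show "germ_eq n f g \<Longrightarrow> germ_eq n g f" by (simp add: germ_eq_def)
qed

lemma germ_eq_trans: "germ_eq n f g \<Longrightarrow> germ_eq n g h \<Longrightarrow> germ_eq n f h"
proof -
  assume "germ_eq n f g" "germ_eq n g h"
  moreover have "{w \<in> words n. f w \<noteq> h w} \<subseteq> {w \<in> words n. f w \<noteq> g w} \<union> {w \<in> words n. g w \<noteq> h w}"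
    by auto
  ultimately show ?thesis unfolding germ_eq_def by (meson finite_UnI finite_subset)
qed

lemma germ_eq_iff: "germ n f = germ n g \<longleftrightarrow> germ_eq n f g"
proof
  assume "germ n f = germ n g"
  then show "germ_eq n f g" using germ_eq_refl[of n g] by (auto simp: germ_def)
next
  assume "germ_eq n f g"
  then show "germ n f = germ n g"
    unfolding germ_def by (blast intro: germ_eq_sym germ_eq_trans)
qed

lemma germ_eq_comp:
  assumes g: "V_rep n g" and ff: "germ_eq n f f'" and gg: "germ_eq n g g'"
  shows "germ_eq n (f \<circ> g) (f' \<circ> g')"
proof -
  let ?D = "{x \<in> words n. f x \<noteq> f' x}"
  have "{w \<in> words n. (f \<circ> g) w \<noteq> (f' \<circ> g') w} \<subseteq> {w \<in> words n. g w \<noteq> g' w} \<union> inv g ` ?D"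
  proof
    fix w assume w: "w \<in> {w \<in> words n. (f \<circ> g) w \<noteq> (f' \<circ> g') w}"
    show "w \<in> {w \<in> words n. g w \<noteq> g' w} \<union> inv g ` ?D"
    proof (cases "g w = g' w")
      case True
      have "g w \<in> words n" using w V_rep_words_iff[OF g, of w] by simp
      then have "g w \<in> ?D" using w True by simp
      then show ?thesis using V_rep_inverses(2)[OF g, of w] by (intro UnI2 image_eqI[where x="g w"]) simp_all
    next
      case False
      then show ?thesis using w by simp
    qed
  qed
  moreover have "finite ({w \<in> words n. g w \<noteq> g' w} \<union> inv g ` ?D)"
    using ff gg by (simp add: germ_eq_def)
  ultimately show ?thesis unfolding germ_eq_def by (rule finite_subset)
qed

section \<open>Trees and their leaves\<close>

lemma is_tree_finite: "is_tree n \<tau> \<Longrightarrow> finite \<tau>"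
  by (simp add: is_tree_def)

lemma is_tree_words: "is_tree n \<tau> \<Longrightarrow> \<tau> \<subseteq> words n"
  by (simp add: is_tree_def)

lemma is_tree_Nil: "is_tree n \<tau> \<Longrightarrow> [] \<in> \<tau>"
  by (simp add: is_tree_def)

lemma is_tree_prefix_closed: "is_tree n \<tau> \<Longrightarrow> x @ y \<in> \<tau> \<Longrightarrow> x \<in> \<tau>"
  unfolding is_tree_def by blast

lemma is_tree_sibling: "is_tree n \<tau> \<Longrightarrow> \<alpha> @ [i] \<in> \<tau> \<Longrightarrow> i < n \<Longrightarrow> j < n \<Longrightarrow> \<alpha> @ [j] \<in> \<tau>"
  unfolding is_tree_def by blast

lemma leaves_subset: "leaves n \<tau> \<subseteq> \<tau>"
  by (auto simp: leaves_def)

lemma finite_leaves: "is_tree n \<tau> \<Longrightarrow> finite (leaves n \<tau>)"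
  by (rule finite_subset[OF leaves_subset is_tree_finite])

lemma inner_vertex_child:
  assumes "is_tree n \<tau>" "\<alpha> \<in> \<tau>" "\<alpha> \<notin> leaves n \<tau>" "i < n"
  shows "\<alpha> @ [i] \<in> \<tau>"
proof -
  obtain j where "j < n" "\<alpha> @ [j] \<in> \<tau>" using assms(2,3) by (auto simp: leaves_def)
  then show ?thesis using is_tree_sibling[OF assms(1)] assms(4) by blast
qed

lemma finite_has_longest:
  assumes "finite S" "S \<noteq> {}"
  obtains l where "l \<in> S" "\<And>y. y \<in> S \<Longrightarrow> length y \<le> length l"
proof -
  have "Max (length ` S) \<in> length ` S" using assms by simp
  then obtain l where "l \<in> S" "length l = Max (length ` S)" by auto
  moreover have "\<And>y. y \<in> S \<Longrightarrow> length y \<le> Max (length ` S)" using assms(1) by simp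
  ultimately show ?thesis using that by metis
qed

lemma leaf_below:
  assumes t: "is_tree n \<tau>" and x: "x \<in> \<tau>"
  obtains l where "l \<in> leaves n \<tau>" "prefix x l"
proof -
  let ?S = "{y \<in> \<tau>. prefix x y}"
  obtain l where l: "l \<in> ?S" and longest: "\<And>y. y \<in> ?S \<Longrightarrow> length y \<le> length l"
    using finite_has_longest[of ?S] is_tree_finite[OF t] x by auto
  have "l @ [i] \<notin> \<tau>" for i
  proof
    assume "l @ [i] \<in> \<tau>"
    moreover have "prefix x (l @ [i])" using l by (simp add: prefix_snoc)
    ultimately show False using longest[of "l @ [i]"] by simp
  qed
  then have "l \<in> leaves n \<tau>" using l by (simp add: leaves_def)
  then show ?thesis using l that by blast
qed

lemma leaves_prefix_antichain:
  assumes t: "is_tree n \<tau>"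
  shows "prefix_antichain (leaves n \<tau>)"
  unfolding prefix_antichain_def
proof (intro ballI impI)
  fix a b assume a: "a \<in> leaves n \<tau>" and b: "b \<in> leaves n \<tau>" and "prefix a b"
  then obtain d where d: "b = a @ d" by (auto simp: prefix_def)
  show "a = b"
  proof (cases d)
    case (Cons c r)
    then have ac: "(a @ [c]) @ r \<in> \<tau>" using b d leaves_subset by auto
    then have "a @ [c] \<in> \<tau>" using is_tree_prefix_closed[OF t] by blast
    moreover from this have "c < n" using is_tree_words[OF t] by auto
    ultimately show ?thesis using a by (auto simp: leaves_def)
  qed (use d in simp)
qed

lemma leaf_above:
  assumes t: "is_tree n \<tau>" and w: "w \<in> words n" "w \<notin> \<tau>"
  obtains l where "l \<in> leaves n \<tau>" "prefix l w"
proof -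
  let ?K = "{k. k \<le> length w \<and> take k w \<in> \<tau>}"
  define m where "m = Max ?K"
  have K: "finite ?K" "0 \<in> ?K" using is_tree_Nil[OF t] by auto
  then have mK: "m \<in> ?K" unfolding m_def by (intro Max_in) auto
  have max: "k \<in> ?K \<Longrightarrow> k \<le> m" for k unfolding m_def using K(1) by (rule Max_ge)
  have "m \<noteq> length w" using mK w by auto
  then have m: "m < length w" using mK by simp
  then have not_in: "take m w @ [w ! m] \<notin> \<tau>" using max[of "Suc m"] by (auto simp: take_Suc_conv_app_nth)
  have "w ! m \<in> set w" using m by simp
  then have "w ! m < n" using w(1) by (auto simp: words_def)
  then have "take m w @ [i] \<notin> \<tau>" if "i < n" for i
    using not_in is_tree_sibling[OF t, of "take m w" i "w ! m"] that by blast
  then have "take m w \<in> leaves n \<tau>" using mK by (simp add: leaves_def)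
  then show ?thesis using that take_is_prefix by blast
qed

lemma pmap_cone:
  assumes t: "is_tree n \<tau>" and l: "l \<in> leaves n \<tau>"
  shows "pmap n \<tau> b (l @ g) = b l @ g"
proof -
  have "(THE \<alpha>. \<alpha> \<in> leaves n \<tau> \<and> (\<exists>\<gamma>. l @ g = \<alpha> @ \<gamma>)) = l"
    using l prefix_antichain_unique[OF leaves_prefix_antichain[OF t] _ l, of _ "l @ g"]
    by (intro the_equality) (auto simp: prefix_def)
  then show ?thesis using l unfolding pmap_def by (auto simp: Let_def)
qed

text \<open>Only the finitely many vertices of \<open>\<tau>\<close> are not below a leaf.\<close>
lemma pmap_germ_eq:
  assumes t: "is_tree n \<tau>"
    and h: "\<And>l g. l \<in> leaves n \<tau> \<Longrightarrow> g \<in> words n \<Longrightarrow> f (l @ g) = b l @ g"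
  shows "germ_eq n (pmap n \<tau> b) f"
proof -
  have "{w \<in> words n. pmap n \<tau> b w \<noteq> f w} \<subseteq> \<tau>"
  proof (rule subsetI, rule ccontr)
    fix w assume w: "w \<in> {w \<in> words n. pmap n \<tau> b w \<noteq> f w}" and "w \<notin> \<tau>"
    then obtain l where "l \<in> leaves n \<tau>" "prefix l w"
      using leaf_above[OF t, of w] by blast
    then obtain g where "l \<in> leaves n \<tau>" "w = l @ g" by (auto simp: prefix_def)
    then show False using w pmap_cone[OF t] h by auto
  qed
  then show ?thesis unfolding germ_eq_def using is_tree_finite[OF t] finite_subset by blast
qed


section \<open>Every representative is equivalent to a tree-pair map\<close>

definition level :: "nat \<Rightarrow> nat \<Rightarrow> nat list set" where
  "level n k = {w \<in> words n. length w = k}"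

lemma level_subset_words: "level n k \<subseteq> words n"
  by (auto simp: level_def)

lemma finite_level: "finite (level n k)"
  using finite_words_le[of n k] by (rule rev_finite_subset) (auto simp: level_def)

lemma level_prefix_antichain: "prefix_antichain (level n k)"
  unfolding prefix_antichain_def level_def prefix_def by auto

lemma is_tree_full: "is_tree n {w \<in> words n. length w \<le> N}"
  unfolding is_tree_def using finite_words_le[of n N] by auto

lemma leaves_full: "0 < n \<Longrightarrow> leaves n {w \<in> words n. length w \<le> N} = level n N"
  unfolding leaves_def level_def by force

lemma V_rep_append_beyond:
  assumes f: "V_rep n f" and N: "\<And>d. d \<in> defects n f \<Longrightarrow> length d < N"
    and w: "w \<in> words n" "N \<le> length w"
  shows "g \<in> words n \<Longrightarrow> f (w @ g) = f w @ g"
proof (induction g rule: rev_induct)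
  case (snoc x xs)
  then have "w @ xs \<in> words n" "x < n" "w @ xs \<notin> defects n f" using w N[of "w @ xs"] by auto
  then have "f ((w @ xs) @ [x]) = f (w @ xs) @ [x]" by (auto simp: defects_def)
  then show ?case using snoc by simp
qed simp

lemma leaves_prefix_closure:
  assumes Aw: "A \<subseteq> words n" and anti: "prefix_antichain A"
  shows "leaves n {x. \<exists>a\<in>A. prefix x a} = A"
proof
  let ?\<tau> = "{x. \<exists>a\<in>A. prefix x a}"
  show "leaves n ?\<tau> \<subseteq> A"
  proof
    fix x assume x: "x \<in> leaves n ?\<tau>"
    then obtain a where a: "a \<in> A" "prefix x a" unfolding leaves_def by auto
    show "x \<in> A"
    proof (cases "x = a")
      case False
      obtain d where "a = x @ d" using a(2) by (auto simp: prefix_def)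
      with False obtain c r where "a = (x @ [c]) @ r" by (cases d) auto
      then have "c < n" "x @ [c] \<in> ?\<tau>" using a Aw by (auto intro!: bexI[of _ a])
      then show ?thesis using x unfolding leaves_def by auto
    qed (use a in simp)
  qed
  have "a @ [i] \<notin> ?\<tau>" if a: "a \<in> A" for a i
  proof
    assume "a @ [i] \<in> ?\<tau>"
    then obtain b where b: "b \<in> A" "prefix (a @ [i]) b" by auto
    then have "a = b" using anti a append_prefixD[OF b(2)] unfolding prefix_antichain_def by blast
    then show False using b(2) by (auto dest: prefix_length_le)
  qed
  then show "A \<subseteq> leaves n ?\<tau>" unfolding leaves_def by auto
qed

text \<open>Siblings of a vertex of the prefix closure are in it, because long words below them lie
  in cones of the antichain.\<close>
lemma is_tree_prefix_closure:
  assumes n: "0 < n" and fin: "finite A" and Aw: "A \<subseteq> words n" and anti: "prefix_antichain A"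
    and S: "finite S" and cover: "\<And>v. v \<in> words n \<Longrightarrow> v \<notin> S \<Longrightarrow> \<exists>a\<in>A. prefix a v"
  shows "is_tree n {x. \<exists>a\<in>A. prefix x a}"
proof -
  let ?\<tau> = "{x. \<exists>a\<in>A. prefix x a}"
  obtain K where K: "\<forall>s\<in>S. length s < K"
    using S by (metis finite_imageI finite_nat_set_iff_bounded imageI)
  have long_covered: "\<exists>a\<in>A. prefix a (\<alpha> @ replicate K 0)" if "\<alpha> \<in> words n" for \<alpha>
    using that n K by (intro cover) (auto simp: replicate_zero_words)
  have child: "\<alpha> @ [j] \<in> ?\<tau>" if i: "\<alpha> @ [i] \<in> ?\<tau>" and j: "j < n" for \<alpha> i j
  proof -
    obtain a where a: "a \<in> A" "prefix (\<alpha> @ [i]) a" using i by auto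
    have "prefix \<alpha> a" using a(2) by (rule append_prefixD)
    then have "\<alpha> \<in> words n" using a(1) Aw words_prefix by blast
    then obtain a' where a': "a' \<in> A" "prefix a' ((\<alpha> @ [j]) @ replicate K 0)"
      using long_covered[of "\<alpha> @ [j]"] j by auto
    moreover have "prefix (\<alpha> @ [j]) ((\<alpha> @ [j]) @ replicate K 0)" by simp
    ultimately have "prefix a' (\<alpha> @ [j]) \<or> prefix (\<alpha> @ [j]) a'"
      using prefix_same_cases by blast
    then consider "prefix (\<alpha> @ [j]) a'" | "prefix a' \<alpha>" | "a' = \<alpha> @ [j]"
      by (auto simp: prefix_snoc)
    then show ?thesis
    proof cases
      case 2
      then have "prefix a' a" using prefix_order.trans[OF 2 append_prefixD[OF a(2)]] by simp
      then have "a' = a" using anti a a' unfolding prefix_antichain_def by blast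
      then have "prefix a \<alpha>" using 2 by simp
      then have "prefix (\<alpha> @ [i]) \<alpha>" by (rule prefix_order.trans[OF a(2)])
      then show ?thesis by (auto dest: prefix_length_le)
    qed (use a' in auto)
  qed
  show ?thesis
    unfolding is_tree_def
  proof (intro conjI allI impI)
    have "?\<tau> = (\<Union>a\<in>A. set (prefixes a))" by auto
    then show "finite ?\<tau>" using fin by simp
    show "?\<tau> \<subseteq> words n" using Aw words_prefix by auto
    show "[] \<in> ?\<tau>" using long_covered[of "[]"] by auto
  next
    fix \<alpha> \<beta> assume "\<alpha> @ \<beta> \<in> ?\<tau>"
    then obtain a where "a \<in> A" "prefix (\<alpha> @ \<beta>) a" by auto
    then show "\<alpha> \<in> ?\<tau>" using append_prefixD by auto
  next
    fix \<alpha> show "(\<forall>i<n. \<alpha> @ [i] \<in> ?\<tau>) \<or> (\<forall>i<n. \<alpha> @ [i] \<notin> ?\<tau>)" using child by blast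
  qed
qed

lemma V_rep_image_level_prefix_antichain:
  assumes f: "V_rep n f" and N: "\<And>d. d \<in> defects n f \<Longrightarrow> length d < N"
  shows "prefix_antichain (f ` level n N)"
  unfolding prefix_antichain_def
proof (intro ballI impI)
  fix a b assume "a \<in> f ` level n N" "b \<in> f ` level n N" and "prefix a b"
  then obtain w w' d where w: "w \<in> level n N" "w' \<in> level n N" "a = f w" "b = f w'" "b = a @ d"
    unfolding prefix_def by auto
  moreover have "b \<in> words n" using w(2,4) V_rep_words_iff[OF f, of w'] by (simp add: level_def)
  then have "d \<in> words n" using w(5) by simp
  ultimately have "f (w @ d) = f w'" using V_rep_append_beyond[OF f N] by (auto simp: level_def)
  then have "w @ d = w'" using bij_is_inj[OF V_rep_bij[OF f]] by (simp add: inj_eq)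
  then show "a = b" using w by (auto simp: level_def)
qed

lemma V_rep_image_level_cover:
  assumes f: "V_rep n f" and N: "\<And>d. d \<in> defects n f \<Longrightarrow> length d < N"
    and v: "v \<in> words n" "v \<notin> f ` {w \<in> words n. length w \<le> N}"
  shows "\<exists>a\<in>f ` level n N. prefix a v"
proof -
  let ?u = "inv f v"
  have u: "?u \<in> words n" "f ?u = v"
    using v V_rep_inverses[OF f] V_rep_words_iff[OF f, of ?u] by auto
  have "\<not> length ?u \<le> N"
  proof
    assume "length ?u \<le> N"
    then have "f ?u \<in> f ` {w \<in> words n. length w \<le> N}" using u(1) by simp
    then show False using u(2) v(2) by simp
  qed
  then have "take N ?u \<in> level n N" "f ?u = f (take N ?u) @ drop N ?u"
    using u V_rep_append_beyond[OF f N, of "take N ?u" "drop N ?u"]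
    by (auto simp: level_def words_take words_drop)
  then show ?thesis using u by (auto intro: prefixI)
qed

text \<open>Past the depth \<open>N\<close> of all defects, \<open>f\<close> moves cones rigidly, so it agrees with the tree-pair map
  from the full tree of depth \<open>N\<close> to the tree spanned by the image of its leaves.\<close>
lemma V_rep_germ_eq_V_map:
  assumes f: "V_rep n f" and n: "0 < n"
  obtains v where "v \<in> V_maps n" "germ_eq n f v"
proof -
  obtain N where N: "\<And>d. d \<in> defects n f \<Longrightarrow> length d < N"
    using f unfolding V_rep_def by (metis finite_imageI finite_nat_set_iff_bounded imageI)
  define \<tau>0 where "\<tau>0 = {w \<in> words n. length w \<le> N}"
  define A where "A = f ` level n N"
  define \<tau>1 where "\<tau>1 = {x. \<exists>a\<in>A. prefix x a}"
  have Aw: "A \<subseteq> words n" unfolding A_def level_def using V_rep_words_iff[OF f] by auto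
  note anti = V_rep_image_level_prefix_antichain[OF f N, folded A_def]
  have "finite A" "finite (f ` \<tau>0)" unfolding A_def \<tau>0_def using finite_level finite_words_le by auto
  then have t1: "is_tree n \<tau>1" "leaves n \<tau>1 = A"
    unfolding \<tau>1_def using is_tree_prefix_closure[OF n _ Aw anti] leaves_prefix_closure[OF Aw anti]
      V_rep_image_level_cover[OF f N] by (auto simp: A_def \<tau>0_def)
  have "bij_betw f (leaves n \<tau>0) (leaves n \<tau>1)"
    unfolding \<tau>0_def leaves_full[OF n] t1(2) A_def
    using inj_on_subset[OF bij_is_inj[OF V_rep_bij[OF f]] subset_UNIV] by (simp add: bij_betw_def)
  then have "pmap n \<tau>0 f \<in> V_maps n"
    unfolding V_maps_def using is_tree_full t1 \<tau>0_def by blast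
  moreover have "germ_eq n (pmap n \<tau>0 f) f"
    unfolding \<tau>0_def by (rule pmap_germ_eq[OF is_tree_full])
      (use V_rep_append_beyond[OF f N] in \<open>auto simp: leaves_full[OF n] level_def\<close>)
  ultimately show ?thesis using that germ_eq_sym by blast
qed


section \<open>Tree-pair maps as products of cone permutations\<close>

lemma leaves_no_inner:
  assumes t: "is_tree n \<tau>" and "\<tau> \<subseteq> leaves n \<tau>"
  shows "leaves n \<tau> = {[]}"
proof -
  have "x = []" if x: "x \<in> \<tau>" for x
  proof (rule ccontr)
    assume "x \<noteq> []"
    then obtain c r where "x = [c] @ r" by (cases x) auto
    then have c: "[c] \<in> \<tau>" using is_tree_prefix_closed[OF t] x by blast
    then have "c < n" using is_tree_words[OF t] by auto
    moreover have "[] \<in> leaves n \<tau>" using assms is_tree_Nil[OF t] by auto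
    ultimately show False using c by (auto simp: leaves_def)
  qed
  then have "\<tau> = {[]}" using is_tree_Nil[OF t] by auto
  then show ?thesis using subset_antisym[OF leaves_subset assms(2)] by simp
qed

lemma two_le_card_leaves:
  assumes t: "is_tree n \<tau>" and \<alpha>: "\<alpha> \<in> \<tau>" "\<alpha> \<notin> leaves n \<tau>" and n: "2 \<le> n"
  shows "2 \<le> card (leaves n \<tau>)"
proof -
  have "\<alpha> @ [0] \<in> \<tau>" "\<alpha> @ [1] \<in> \<tau>" using inner_vertex_child[OF t \<alpha>] n by auto
  then obtain l0 l1 where l0: "l0 \<in> leaves n \<tau>" "prefix (\<alpha> @ [0]) l0"
    and l1: "l1 \<in> leaves n \<tau>" "prefix (\<alpha> @ [1]) l1"
    using leaf_below[OF t] by metis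
  have "l0 \<noteq> l1"
  proof
    assume "l0 = l1"
    then have "prefix (\<alpha> @ [0]) (\<alpha> @ [1])"
      using l0 l1 prefix_length_prefix[of "\<alpha> @ [0]" l1 "\<alpha> @ [1]"] by simp
    then show False by simp
  qed
  then have "card {l0, l1} \<le> card (leaves n \<tau>)"
    using l0 l1 finite_leaves[OF t] by (intro card_mono) auto
  then show ?thesis using \<open>l0 \<noteq> l1\<close> by simp
qed

definition children :: "nat \<Rightarrow> nat list \<Rightarrow> nat list set" where
  "children n \<alpha> = {\<alpha> @ [i] | i. i < n}"

lemma tree_caret:
  assumes t: "is_tree n \<tau>" and "\<not> \<tau> \<subseteq> leaves n \<tau>"
  obtains \<alpha> where "\<alpha> \<in> \<tau>" "\<alpha> \<notin> leaves n \<tau>" "children n \<alpha> \<subseteq> leaves n \<tau>"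
proof -
  let ?S = "\<tau> - leaves n \<tau>"
  obtain \<alpha> where \<alpha>: "\<alpha> \<in> ?S" and longest: "\<And>y. y \<in> ?S \<Longrightarrow> length y \<le> length \<alpha>"
    using finite_has_longest[of ?S] is_tree_finite[OF t] assms(2) by auto
  have "\<alpha> @ [i] \<in> leaves n \<tau>" if "i < n" for i
  proof (rule ccontr)
    assume "\<alpha> @ [i] \<notin> leaves n \<tau>"
    moreover have "\<alpha> @ [i] \<in> \<tau>" using inner_vertex_child[OF t _ _ that] \<alpha> by blast
    ultimately show False using longest[of "\<alpha> @ [i]"] by simp
  qed
  then show ?thesis using \<alpha> that by (auto simp: children_def)
qed

lemma tree_prune_caret:
  assumes t: "is_tree n \<tau>" and \<alpha>: "\<alpha> \<in> \<tau>" "\<alpha> \<notin> leaves n \<tau>"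
    and ch: "children n \<alpha> \<subseteq> leaves n \<tau>" and n: "0 < n"
  shows "is_tree n (\<tau> - children n \<alpha>)"
    and "leaves n (\<tau> - children n \<alpha>) = (leaves n \<tau> - children n \<alpha>) \<union> {\<alpha>}"
    and "card (\<tau> - children n \<alpha>) < card \<tau>"
proof -
  let ?C = "children n \<alpha>"
  have inC: "x @ [i] \<in> ?C \<longleftrightarrow> x = \<alpha> \<and> i < n" for x i by (auto simp: children_def)
  have "\<alpha> \<notin> ?C" by (auto simp: children_def)
  show "is_tree n (\<tau> - ?C)"
    unfolding is_tree_def
  proof (intro conjI allI impI)
    show "finite (\<tau> - ?C)" "\<tau> - ?C \<subseteq> words n" "[] \<in> \<tau> - ?C"
      using is_tree_finite[OF t] is_tree_words[OF t] is_tree_Nil[OF t] by (auto simp: children_def)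
  next
    fix x y assume xy: "x @ y \<in> \<tau> - ?C"
    have "x \<notin> ?C"
    proof
      assume "x \<in> ?C"
      then have x: "x \<in> leaves n \<tau>" using ch by auto
      show False
      proof (cases y)
        case Nil then show False using xy \<open>x \<in> ?C\<close> by simp
      next
        case (Cons c r)
        then have xc: "x @ [c] \<in> \<tau>" using xy is_tree_prefix_closed[OF t, of "x @ [c]" r] by simp
        then have "c < n" using is_tree_words[OF t] by auto
        then show False using x xc by (auto simp: leaves_def)
      qed
    qed
    then show "x \<in> \<tau> - ?C" using xy is_tree_prefix_closed[OF t] by blast
  next
    fix x
    show "(\<forall>i<n. x @ [i] \<in> \<tau> - ?C) \<or> (\<forall>i<n. x @ [i] \<notin> \<tau> - ?C)"
    proof (cases "x = \<alpha>")
      case False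
      then show ?thesis using inC t unfolding is_tree_def by simp
    qed (use inC in auto)
  qed
  show "leaves n (\<tau> - ?C) = (leaves n \<tau> - ?C) \<union> {\<alpha>}"
    using \<alpha> inC \<open>\<alpha> \<notin> ?C\<close> by (auto simp: leaves_def)
  have "\<alpha> @ [0] \<in> ?C" "?C \<subseteq> \<tau>" using n ch leaves_subset by (auto simp: children_def)
  then have "\<tau> - ?C \<subset> \<tau>" by auto
  then show "card (\<tau> - ?C) < card \<tau>" using is_tree_finite[OF t] psubset_card_mono by blast
qed

lemma bij_betw_extend_perm:
  assumes fin: "finite B" and X: "X \<subseteq> B" and inj: "inj_on f X" and fX: "f ` X \<subseteq> B"
  obtains \<pi> where "bij_betw \<pi> B B" "\<And>x. x \<in> X \<Longrightarrow> \<pi> x = f x"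
proof -
  have fx: "finite X" using fin X by (rule finite_subset[rotated])
  have "card (B - X) = card (B - f ` X)"
    using card_Diff_subset[OF fx X] card_Diff_subset[OF finite_imageI[OF fx] fX] card_image[OF inj]
    by simp
  then obtain g where g: "bij_betw g (B - X) (B - f ` X)"
    using finite_same_card_bij[of "B - X" "B - f ` X"] fin by auto
  define \<pi> where "\<pi> = (\<lambda>x. if x \<in> X then f x else g x)"
  have "bij_betw \<pi> X (f ` X)" unfolding \<pi>_def using inj by (simp add: bij_betw_def inj_on_def)
  moreover have "bij_betw \<pi> (B - X) (B - f ` X)"
    using g bij_betw_cong[of "B - X" \<pi> g "B - f ` X"] unfolding \<pi>_def by auto
  ultimately have "bij_betw \<pi> (X \<union> (B - X)) (f ` X \<union> (B - f ` X))"
    by (rule bij_betw_combine) auto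
  moreover have "X \<union> (B - X) = B" "f ` X \<union> (B - f ` X) = B" using X fX by auto
  ultimately show ?thesis using that unfolding \<pi>_def by auto
qed

lemma leaf_bij_align_carets:
  assumes b: "bij_betw b L B" and fin: "finite B"
    and "children n \<alpha> \<subseteq> L" and "children n \<alpha>' \<subseteq> B"
  obtains \<pi> where "bij_betw \<pi> B B" "\<And>i. i < n \<Longrightarrow> \<pi> (b (\<alpha> @ [i])) = \<alpha>' @ [i]"
proof -
  have C: "\<alpha> @ [i] \<in> L" and C': "\<alpha>' @ [i] \<in> B" if "i < n" for i
    using assms(3,4) that by (auto simp: children_def)
  define f where "f = (\<lambda>x. \<alpha>' @ [last (inv_into L b x)])"
  have fb: "f (b (\<alpha> @ [i])) = \<alpha>' @ [i]" if "i < n" for i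
    using b C[OF that] by (simp add: f_def bij_betw_def inv_into_f_f)
  let ?X = "b ` {\<alpha> @ [i] | i. i < n}"
  have X: "?X \<subseteq> B" using b C by (auto dest: bij_betwE)
  have inj: "inj_on f ?X"
  proof (rule inj_onI)
    fix x y assume "x \<in> ?X" "y \<in> ?X" "f x = f y"
    then obtain i j where "i < n" "j < n" "x = b (\<alpha> @ [i])" "y = b (\<alpha> @ [j])" "f x = f y" by auto
    then show "x = y" using fb by auto
  qed
  have fX: "f ` ?X \<subseteq> B" using fb C' by auto
  obtain \<pi> where "bij_betw \<pi> B B" "\<And>x. x \<in> ?X \<Longrightarrow> \<pi> x = f x"
    using bij_betw_extend_perm[OF fin X inj fX] by blast
  then show ?thesis using that fb by auto
qed


lemma card_leaves_eq_1_iff: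
  assumes t: "is_tree n \<tau>" and n: "2 \<le> n"
  shows "card (leaves n \<tau>) = 1 \<longleftrightarrow> \<tau> \<subseteq> leaves n \<tau>"
proof
  assume card: "card (leaves n \<tau>) = 1"
  show "\<tau> \<subseteq> leaves n \<tau>"
  proof (rule ccontr)
    assume "\<not> \<tau> \<subseteq> leaves n \<tau>"
    then obtain \<alpha> where "\<alpha> \<in> \<tau>" "\<alpha> \<notin> leaves n \<tau>" by auto
    then have "2 \<le> card (leaves n \<tau>)" by (rule two_le_card_leaves[OF t _ _ n])
    then show False using card by simp
  qed
qed (use leaves_no_inner[OF t] in simp)

lemma image_children:
  assumes "\<And>i. i < n \<Longrightarrow> b (\<alpha> @ [i]) = \<alpha>' @ [i]"
  shows "b ` children n \<alpha> = children n \<alpha>'"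
proof
  show "b ` children n \<alpha> \<subseteq> children n \<alpha>'" using assms by (auto simp: children_def)
  show "children n \<alpha>' \<subseteq> b ` children n \<alpha>"
  proof
    fix y assume "y \<in> children n \<alpha>'"
    then obtain i where "i < n" "y = \<alpha>' @ [i]" by (auto simp: children_def)
    then have "y = b (\<alpha> @ [i])" "\<alpha> @ [i] \<in> children n \<alpha>" using assms by (auto simp: children_def)
    then show "y \<in> b ` children n \<alpha>" by blast
  qed
qed

lemma bij_betw_prune:
  assumes b: "bij_betw b L B" and C: "C \<subseteq> L" "C' \<subseteq> B" "b ` C = C'" and \<alpha>: "\<alpha> \<notin> L" "\<alpha>' \<notin> B"
  shows "bij_betw (b(\<alpha> := \<alpha>')) ((L - C) \<union> {\<alpha>}) ((B - C') \<union> {\<alpha>'})"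
proof -
  have "bij_betw b (L - C) (B - C')"
    using bij_betw_DiffI[OF b bij_betw_subset[OF b C(1)] C(1,2)] C(3) by simp
  moreover have "bij_betw (b(\<alpha> := \<alpha>')) (L - C) (B - C') = bij_betw b (L - C) (B - C')"
    by (rule bij_betw_cong) (use \<alpha>(1) in auto)
  ultimately show ?thesis using \<alpha> by (intro bij_betw_combine) auto
qed

lemma realizes_unprune:
  assumes h: "\<And>l g. l \<in> (L - children n \<alpha>) \<union> {\<alpha>} \<Longrightarrow> g \<in> words n \<Longrightarrow> h (l @ g) = (b(\<alpha> := \<alpha>')) l @ g"
    and \<alpha>: "\<alpha> \<notin> L" and b\<alpha>: "\<And>i. i < n \<Longrightarrow> b (\<alpha> @ [i]) = \<alpha>' @ [i]"
    and l: "l \<in> L" and g: "g \<in> words n"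
  shows "h (l @ g) = b l @ g"
proof (cases "l \<in> children n \<alpha>")
  case True
  then obtain i where "i < n" "l = \<alpha> @ [i]" by (auto simp: children_def)
  then show ?thesis using h[of \<alpha> "[i] @ g"] g b\<alpha> by simp
next
  case False
  then show ?thesis using h[OF _ g] l \<alpha> by auto
qed

lemma inv_cone_perm_cone:
  assumes "finite B" "B \<subseteq> words n" "prefix_antichain B" "bij_betw \<pi> B B" and x: "x \<in> B" and g: "g \<in> words n"
  shows "inv (cone_perm n B \<pi>) (\<pi> x @ g) = x @ g"
proof -
  have "cone_perm n B \<pi> (x @ g) = \<pi> x @ g" using assms by (intro cone_perm_cone) auto
  then show ?thesis using V_rep_inverses(2)[OF V_rep_cone_perm[OF assms(1-4)]] by metis
qed

text \<open>Induction on the size of the domain tree: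
  permute the target leaves so that the children of a caret of each tree correspond, prune
  both carets, and undo the permutation afterwards.\<close>
lemma tree_pair_realized:
  assumes n: "2 \<le> n"
    and P_id: "P id" and P_comp: "\<And>f g. P f \<Longrightarrow> P g \<Longrightarrow> P (f \<circ> g)" and P_inv: "\<And>f. P f \<Longrightarrow> P (inv f)"
    and P_V_rep: "\<And>f. P f \<Longrightarrow> V_rep n f"
    and P_cone_perm: "\<And>A \<pi>. finite A \<Longrightarrow> A \<subseteq> words n \<Longrightarrow> prefix_antichain A \<Longrightarrow> bij_betw \<pi> A A
      \<Longrightarrow> P (cone_perm n A \<pi>)"
  shows "is_tree n \<tau> \<Longrightarrow> is_tree n \<tau>' \<Longrightarrow> bij_betw b (leaves n \<tau>) (leaves n \<tau>') \<Longrightarrow>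
     \<exists>h. P h \<and> (\<forall>l\<in>leaves n \<tau>. \<forall>g\<in>words n. h (l @ g) = b l @ g)"
proof (induction "card \<tau>" arbitrary: \<tau> \<tau>' b rule: less_induct)
  case less
  note t = less.prems(1) and t' = less.prems(2) and bb = less.prems(3)
  let ?L = "leaves n \<tau>" and ?B = "leaves n \<tau>'"
  have n0: "0 < n" using n by simp
  have same_shape: "\<tau> \<subseteq> ?L \<longleftrightarrow> \<tau>' \<subseteq> ?B"
    using bij_betw_same_card[OF bb] card_leaves_eq_1_iff[OF t n] card_leaves_eq_1_iff[OF t' n] by simp
  show ?case
  proof (cases "\<tau> \<subseteq> ?L")
    case True
    then have "?L = {[]}" "?B = {[]}" using same_shape leaves_no_inner[OF t] leaves_no_inner[OF t'] by auto
    then have "b [] = []" using bij_betwE[OF bb] by auto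
    then show ?thesis using P_id \<open>?L = {[]}\<close> by auto
  next
    case False
    obtain \<alpha> where \<alpha>: "\<alpha> \<in> \<tau>" "\<alpha> \<notin> ?L" "children n \<alpha> \<subseteq> ?L"
      using tree_caret[OF t False] by blast
    obtain \<alpha>' where \<alpha>': "\<alpha>' \<in> \<tau>'" "\<alpha>' \<notin> ?B" "children n \<alpha>' \<subseteq> ?B"
      using tree_caret[OF t'] False same_shape by blast
    obtain \<pi> where \<pi>: "bij_betw \<pi> ?B ?B" and \<pi>b: "\<And>i. i < n \<Longrightarrow> \<pi> (b (\<alpha> @ [i])) = \<alpha>' @ [i]"
      using leaf_bij_align_carets[OF bb finite_leaves[OF t'] \<alpha>(3) \<alpha>'(3)] by blast
    note prune = tree_prune_caret[OF t \<alpha> n0] and prune' = tree_prune_caret[OF t' \<alpha>' n0]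
    define b1 where "b1 = \<pi> \<circ> b"
    have bb1: "bij_betw b1 ?L ?B" unfolding b1_def using bb \<pi> bij_betw_trans by blast
    have b1\<alpha>: "b1 (\<alpha> @ [i]) = \<alpha>' @ [i]" if "i < n" for i using \<pi>b[OF that] by (simp add: b1_def)
    have "bij_betw (b1(\<alpha> := \<alpha>')) (leaves n (\<tau> - children n \<alpha>)) (leaves n (\<tau>' - children n \<alpha>'))"
      unfolding prune(2) prune'(2)
      using bij_betw_prune[OF bb1 \<alpha>(3) \<alpha>'(3) image_children[OF b1\<alpha>] \<alpha>(2) \<alpha>'(2)] .
    then obtain h' where h': "P h'" "\<And>l g. l \<in> leaves n (\<tau> - children n \<alpha>) \<Longrightarrow> g \<in> words n \<Longrightarrow>
        h' (l @ g) = (b1(\<alpha> := \<alpha>')) l @ g"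
      using less.hyps[OF prune(3) prune(1) prune'(1)] by blast
    have B: "finite ?B" "?B \<subseteq> words n" "prefix_antichain ?B"
      using finite_leaves[OF t'] leaves_subset is_tree_words[OF t'] leaves_prefix_antichain[OF t'] by auto
    define p where "p = cone_perm n ?B \<pi>"
    have Pp: "P p" unfolding p_def by (rule P_cone_perm[OF B \<pi>])
    have "inv p (h' (l @ g)) = b l @ g" if l: "l \<in> ?L" and g: "g \<in> words n" for l g
    proof -
      have "h' (l @ g) = \<pi> (b l) @ g"
        using realizes_unprune[OF h'(2)[unfolded prune(2)] \<alpha>(2) b1\<alpha> l g] by (simp add: b1_def)
      then show ?thesis unfolding p_def using inv_cone_perm_cone[OF B \<pi> _ g] bij_betwE[OF bb] l by simp
    qed
    then show ?thesis using P_comp[OF P_inv[OF Pp] h'(1)] by (intro exI[of _ "inv p \<circ> h'"]) simp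
  qed
qed


section \<open>The group \<open>V\<^sub>n\<close> as germs of representatives\<close>

lemma V_rep_realizes_tree_pair:
  assumes "2 \<le> n" "is_tree n \<tau>" "is_tree n \<tau>'" "bij_betw b (leaves n \<tau>) (leaves n \<tau>')"
  obtains h where "V_rep n h" "\<And>l g. l \<in> leaves n \<tau> \<Longrightarrow> g \<in> words n \<Longrightarrow> h (l @ g) = b l @ g"
  using tree_pair_realized[of n "V_rep n", OF assms(1) V_rep_id V_rep_comp V_rep_inv _ V_rep_cone_perm
      assms(2-4)] that by blast

lemma carrier_Vgroup:
  assumes n: "2 \<le> n"
  shows "carrier (Vgroup n) = germ n ` {f. V_rep n f}"
proof
  show "carrier (Vgroup n) \<subseteq> germ n ` {f. V_rep n f}"
  proof
    fix X assume "X \<in> carrier (Vgroup n)"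
    then obtain \<tau>0 \<tau>1 b where X: "X = germ n (pmap n \<tau>0 b)" and t: "is_tree n \<tau>0" "is_tree n \<tau>1"
      "bij_betw b (leaves n \<tau>0) (leaves n \<tau>1)" by (auto simp: Vgroup_def V_maps_def)
    obtain h where h: "V_rep n h" "\<And>l g. l \<in> leaves n \<tau>0 \<Longrightarrow> g \<in> words n \<Longrightarrow> h (l @ g) = b l @ g"
      using V_rep_realizes_tree_pair[OF n t] by blast
    have "germ_eq n (pmap n \<tau>0 b) h" using pmap_germ_eq[OF t(1)] h(2) by auto
    then have "X = germ n h" using X germ_eq_iff by simp
    then show "X \<in> germ n ` {f. V_rep n f}" using h(1) by simp
  qed
  show "germ n ` {f. V_rep n f} \<subseteq> carrier (Vgroup n)"
  proof
    fix X assume "X \<in> germ n ` {f. V_rep n f}"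
    then obtain f where f: "V_rep n f" "X = germ n f" by auto
    obtain v where "v \<in> V_maps n" "germ_eq n f v" using V_rep_germ_eq_V_map[OF f(1)] n by auto
    then have "v \<in> V_maps n" "X = germ n v" using f(2) germ_eq_iff by simp_all
    then show "X \<in> carrier (Vgroup n)" by (simp add: Vgroup_def)
  qed
qed

lemma germ_in_carrier: "2 \<le> n \<Longrightarrow> V_rep n f \<Longrightarrow> germ n f \<in> carrier (Vgroup n)"
  using carrier_Vgroup by auto

lemma one_Vgroup: "\<one>\<^bsub>Vgroup n\<^esub> = germ n id"
  by (simp add: Vgroup_def)

text \<open>Multiplication in \<open>Vgroup n\<close> composes arbitrarily chosen members of the two germs, which is
  well defined because the right factor permutes \<open>n\<^sup>*\<close>.\<close>
lemma mult_Vgroup_germ: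
  assumes g: "V_rep n g"
  shows "germ n f \<otimes>\<^bsub>Vgroup n\<^esub> germ n g = germ n (f \<circ> g)"
proof -
  have "(SOME f'. f' \<in> germ n f) \<in> germ n f" "(SOME g'. g' \<in> germ n g) \<in> germ n g"
    by (rule someI[of _ f] someI[of _ g], simp add: germ_def germ_eq_refl)+
  then have "germ_eq n (f \<circ> g) ((SOME f'. f' \<in> germ n f) \<circ> (SOME g'. g' \<in> germ n g))"
    using germ_eq_comp[OF g] by (simp add: germ_def)
  then show ?thesis using germ_eq_iff germ_eq_sym by (simp add: Vgroup_def)
qed

lemma group_Vgroup:
  assumes n: "2 \<le> n"
  shows "group (Vgroup n)"
proof (rule groupI)
  note carrier = carrier_Vgroup[OF n]
  fix x y assume "x \<in> carrier (Vgroup n)" "y \<in> carrier (Vgroup n)"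
  then obtain f g where "V_rep n f" "V_rep n g" "x = germ n f" "y = germ n g" using carrier by auto
  then show "x \<otimes>\<^bsub>Vgroup n\<^esub> y \<in> carrier (Vgroup n)"
    using mult_Vgroup_germ germ_in_carrier[OF n V_rep_comp] by simp
next
  show "\<one>\<^bsub>Vgroup n\<^esub> \<in> carrier (Vgroup n)" using germ_in_carrier[OF n V_rep_id] one_Vgroup by simp
next
  note carrier = carrier_Vgroup[OF n]
  fix x y z assume "x \<in> carrier (Vgroup n)" "y \<in> carrier (Vgroup n)" "z \<in> carrier (Vgroup n)"
  then obtain f g h where "V_rep n g" "V_rep n h" "x = germ n f" "y = germ n g" "z = germ n h"
    using carrier by auto
  then show "x \<otimes>\<^bsub>Vgroup n\<^esub> y \<otimes>\<^bsub>Vgroup n\<^esub> z = x \<otimes>\<^bsub>Vgroup n\<^esub> (y \<otimes>\<^bsub>Vgroup n\<^esub> z)"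
    using mult_Vgroup_germ V_rep_comp by (simp add: comp_assoc)
next
  fix x assume "x \<in> carrier (Vgroup n)"
  then obtain f where f: "V_rep n f" "x = germ n f" using carrier_Vgroup[OF n] by auto
  then show "\<one>\<^bsub>Vgroup n\<^esub> \<otimes>\<^bsub>Vgroup n\<^esub> x = x" using mult_Vgroup_germ one_Vgroup by simp
  have "germ n (inv f) \<otimes>\<^bsub>Vgroup n\<^esub> x = \<one>\<^bsub>Vgroup n\<^esub>"
    using f mult_Vgroup_germ one_Vgroup permutes_inv_o(2)[OF V_rep_permutes] by simp
  then show "\<exists>y\<in>carrier (Vgroup n). y \<otimes>\<^bsub>Vgroup n\<^esub> x = \<one>\<^bsub>Vgroup n\<^esub>"
    using germ_in_carrier[OF n V_rep_inv[OF f(1)]] by blast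
qed

lemma inv_Vgroup_germ:
  assumes n: "2 \<le> n" and f: "V_rep n f"
  shows "m_inv (Vgroup n) (germ n f) = germ n (inv f)"
proof -
  interpret group "Vgroup n" by (rule group_Vgroup[OF n])
  have "germ n (inv f) \<otimes>\<^bsub>Vgroup n\<^esub> germ n f = \<one>\<^bsub>Vgroup n\<^esub>"
    using f mult_Vgroup_germ one_Vgroup permutes_inv_o(2)[OF V_rep_permutes] by simp
  then show ?thesis
    using inv_equality germ_in_carrier[OF n f] germ_in_carrier[OF n V_rep_inv[OF f]] by blast
qed


section \<open>Swapping two cones\<close>

definition cone_swap :: "nat \<Rightarrow> nat list \<Rightarrow> nat list \<Rightarrow> nat list \<Rightarrow> nat list" where
  "cone_swap n u v = cone_perm n {u, v} (Transposition.transpose u v)"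

lemma V_rep_cone_swap: "u \<parallel> v \<Longrightarrow> u \<in> words n \<Longrightarrow> v \<in> words n \<Longrightarrow> V_rep n (cone_swap n u v)"
  unfolding cone_swap_def by (rule V_rep_cone_perm) (auto simp: parallel_prefix_antichain)

lemma cone_swap_left: "u \<parallel> v \<Longrightarrow> u @ g \<in> words n \<Longrightarrow> cone_swap n u v (u @ g) = v @ g"
  unfolding cone_swap_def using cone_perm_cone[OF parallel_prefix_antichain, of u v u g n] by simp

lemma cone_swap_commute: "cone_swap n u v = cone_swap n v u"
  unfolding cone_swap_def by (simp add: insert_commute transpose_commute)

lemma cone_swap_right: "u \<parallel> v \<Longrightarrow> v @ g \<in> words n \<Longrightarrow> cone_swap n u v (v @ g) = u @ g"
  using cone_swap_left[of v u g n] by (simp add: cone_swap_commute parallel_commute)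

lemma cone_swap_outside: "\<not> prefix u w \<Longrightarrow> \<not> prefix v w \<Longrightarrow> cone_swap n u v w = w"
  unfolding cone_swap_def by (rule cone_perm_outside) auto

lemma cone_swap_parallel: "z \<parallel> u \<Longrightarrow> z \<parallel> v \<Longrightarrow> cone_swap n u v (z @ g) = z @ g"
  by (rule cone_swap_outside) (auto simp: parallel_append_left)

lemma cone_swap_involution:
  assumes "u \<parallel> v" "u \<in> words n" "v \<in> words n"
  shows "cone_swap n u v \<circ> cone_swap n u v = id"
proof
  fix w
  have "cone_swap n u v (cone_swap n u v w)
      = cone_perm n {u, v} (Transposition.transpose u v \<circ> Transposition.transpose u v) w"
    unfolding cone_swap_def using assms by (intro cone_perm_comp parallel_prefix_antichain) auto
  then show "(cone_swap n u v \<circ> cone_swap n u v) w = id w"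
    using cone_perm_ident[OF parallel_prefix_antichain[OF assms(1)]] by (simp add: id_def)
qed

lemma cone_perm_transpose:
  assumes "prefix_antichain A" "a \<in> A" "b \<in> A"
  shows "cone_perm n A (Transposition.transpose a b) = cone_swap n a b"
  unfolding cone_swap_def using assms by (intro cone_perm_restrict) auto

lemma cone_swap_conj_on_cone:
  assumes g: "V_rep n g" and xy: "x \<parallel> y" "x \<in> words n" "y \<in> words n"
    and gx: "\<And>c. c \<in> words n \<Longrightarrow> k \<le> length c \<Longrightarrow> g (x @ c) = x' @ c"
    and gy: "\<And>c. c \<in> words n \<Longrightarrow> k \<le> length c \<Longrightarrow> g (y @ c) = y' @ c"
    and c: "c \<in> words n" "k \<le> length c"
  shows "(g \<circ> cone_swap n x y \<circ> inv g) (x' @ c) = y' @ c"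
proof -
  have "inv g (x' @ c) = x @ c" using gx[OF c] V_rep_inverses(2)[OF g] by metis
  then show ?thesis using cone_swap_left[OF xy(1)] xy(2) c gy[OF c] by simp
qed

lemma inv_not_in_cone:
  assumes g: "V_rep n g" and gu: "\<And>c. c \<in> words n \<Longrightarrow> k \<le> length c \<Longrightarrow> g (u @ c) = u' @ c"
    and w: "w \<in> words n" "\<not> prefix u' w" "w \<notin> g ` (\<lambda>c. u @ c) ` {c \<in> words n. length c \<le> k}"
  shows "\<not> prefix u (inv g w)"
proof
  assume "prefix u (inv g w)"
  then obtain c where c: "inv g w = u @ c" by (auto simp: prefix_def)
  then have cw: "c \<in> words n" "g (u @ c) = w"
    using w(1) V_rep_words_iff[OF g, of "inv g w"] V_rep_inverses(1)[OF g, of w] by auto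
  show False
  proof (cases "length c \<le> k")
    case True
    then show False using cw w(3) by auto
  next
    case False
    then have "w = u' @ c" using cw gu by simp
    then show False using w(2) by simp
  qed
qed

lemma cone_swap_conj_germ_eq:
  assumes g: "V_rep n g" and xy: "x \<parallel> y" "x \<in> words n" "y \<in> words n"
    and xy': "x' \<parallel> y'" "x' \<in> words n" "y' \<in> words n"
    and gx: "\<And>c. c \<in> words n \<Longrightarrow> k \<le> length c \<Longrightarrow> g (x @ c) = x' @ c"
    and gy: "\<And>c. c \<in> words n \<Longrightarrow> k \<le> length c \<Longrightarrow> g (y @ c) = y' @ c"
  shows "germ_eq n (g \<circ> cone_swap n x y \<circ> inv g) (cone_swap n x' y')"
proof -
  let ?h = "g \<circ> cone_swap n x y \<circ> inv g"
  let ?short = "\<lambda>u. (\<lambda>c. u @ c) ` {c \<in> words n. length c \<le> k}"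
  let ?F = "?short x' \<union> ?short y' \<union> g ` (?short x \<union> ?short y)"
  have "finite ?F" using finite_words_le by blast
  moreover have "{w \<in> words n. ?h w \<noteq> cone_swap n x' y' w} \<subseteq> ?F"
  proof (rule subsetI, rule ccontr)
    fix w assume w: "w \<in> {w \<in> words n. ?h w \<noteq> cone_swap n x' y' w}" and nF: "w \<notin> ?F"
    have ww: "w \<in> words n" and ne: "?h w \<noteq> cone_swap n x' y' w" using w by auto
    have long: "k \<le> length c" if "w = u @ c" "?short u \<subseteq> ?F" for u c
    proof (rule ccontr)
      assume "\<not> k \<le> length c"
      then have "w \<in> ?short u" using that(1) ww by auto
      then show False using that(2) nF by blast
    qed
    consider (x') c where "w = x' @ c" | (y') c where "w = y' @ c"
      | (none) "\<not> prefix x' w" "\<not> prefix y' w"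
      by (auto simp: prefix_def)
    then show False
    proof cases
      case x'
      then have c: "c \<in> words n" "k \<le> length c" using ww long[of x' c] by auto
      have "?h w = y' @ c" using cone_swap_conj_on_cone[OF g xy gx gy c] x' by simp
      moreover have "cone_swap n x' y' w = y' @ c" using cone_swap_left[OF xy'(1)] ww x' by simp
      ultimately show False using ne by simp
    next
      case y'
      then have c: "c \<in> words n" "k \<le> length c" using ww long[of y' c] by auto
      have yx: "y \<parallel> x" using xy(1) by (simp add: parallel_commute)
      have "?h w = x' @ c"
        using cone_swap_conj_on_cone[OF g yx xy(3,2) gy gx c] y' by (simp add: cone_swap_commute)
      moreover have "cone_swap n x' y' w = x' @ c" using cone_swap_right[OF xy'(1)] ww y' by simp
      ultimately show False using ne by simp
    next
      case none
      have "w \<notin> g ` ?short x" "w \<notin> g ` ?short y" using nF by blast+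
      then have "\<not> prefix x (inv g w)" "\<not> prefix y (inv g w)"
        using inv_not_in_cone[OF g gx ww none(1)] inv_not_in_cone[OF g gy ww none(2)] by simp_all
      then have "?h w = w" using cone_swap_outside V_rep_inverses(1)[OF g, of w] by simp
      moreover have "cone_swap n x' y' w = w" using cone_swap_outside none by simp
      ultimately show False using ne by simp
    qed
  qed
  ultimately show ?thesis unfolding germ_eq_def by (rule finite_subset[rotated])
qed


lemma prefix_children:
  assumes "prefix u w" "w \<noteq> u" "w \<in> words n"
  obtains x where "x \<in> children n u" "prefix x w"
proof -
  obtain d where "w = u @ d" "d \<noteq> []" using assms(1,2) by (auto simp: prefix_def)
  then obtain c r where "w = (u @ [c]) @ r" by (cases d) auto
  then show ?thesis using that[of "u @ [c]"] assms(3) by (auto simp: children_def)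
qed

lemma children_prefix_antichain:
  assumes "u \<parallel> v"
  shows "prefix_antichain (children n u \<union> children n v)"
  unfolding prefix_antichain_def
proof (intro ballI impI)
  fix a b assume a: "a \<in> children n u \<union> children n v" and b: "b \<in> children n u \<union> children n v"
    and ab: "prefix a b"
  have "\<not> x \<parallel> y" if "prefix x y \<or> prefix y x" for x y :: "nat list"
    using that by (auto simp: parallel_def)
  then have cross: "\<not> prefix (u @ [i]) (v @ [j])" "\<not> prefix (v @ [j]) (u @ [i])" for i j
    using parallel_append[OF assms, of "[i]" "[j]"] by blast+
  from a b consider i j where "a = u @ [i]" "b = u @ [j]" | i j where "a = v @ [i]" "b = v @ [j]"
    | i j where "a = u @ [i]" "b = v @ [j]" | i j where "a = v @ [i]" "b = u @ [j]"
    by (auto simp: children_def)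
  then show "a = b" using ab cross by cases simp_all
qed

lemma cone_swap_germ_eq_children:
  assumes uv: "u \<parallel> v" "u \<in> words n" "v \<in> words n"
  defines "A \<equiv> children n u \<union> children n v"
  shows "germ_eq n (cone_perm n A (cone_swap n u v)) (cone_swap n u v)"
proof -
  have anti: "prefix_antichain A" unfolding A_def using children_prefix_antichain[OF uv(1)] .
  have "cone_perm n A (cone_swap n u v) w = cone_swap n u v w" if w: "w \<in> words n" "w \<notin> {u, v}" for w
  proof (cases "\<exists>x\<in>A. prefix x w")
    case True
    then obtain x g where x: "x \<in> A" "w = x @ g" by (auto simp: prefix_def)
    then have perm: "cone_perm n A (cone_swap n u v) w = cone_swap n u v x @ g"
      using cone_perm_cone[OF anti] w(1) by simp
    from x consider i where "x = u @ [i]" | i where "x = v @ [i]" by (auto simp: A_def children_def)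
    then show ?thesis
    proof cases
      case 1
      then show ?thesis using perm x(2) w(1) cone_swap_left[OF uv(1)] by simp
    next
      case 2
      then show ?thesis using perm x(2) w(1) cone_swap_right[OF uv(1)] by simp
    qed
  next
    case False
    have "\<not> prefix u w"
    proof
      assume "prefix u w"
      then obtain x where "x \<in> children n u" "prefix x w" using w prefix_children by blast
      then show False using False by (auto simp: A_def)
    qed
    moreover have "\<not> prefix v w"
    proof
      assume "prefix v w"
      then obtain x where "x \<in> children n v" "prefix x w" using w prefix_children by blast
      then show False using False by (auto simp: A_def)
    qed
    ultimately show ?thesis using cone_perm_outside[OF False] cone_swap_outside by simp
  qed
  then have "{w \<in> words n. cone_perm n A (cone_swap n u v) w \<noteq> cone_swap n u v w} \<subseteq> {u, v}" by auto
  then show ?thesis unfolding germ_eq_def by (rule finite_subset) simp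
qed

section \<open>Subgroups of \<open>V\<^sub>n\<close> containing enough cone swaps\<close>

locale V_subgroup =
  fixes n :: nat and H
  assumes n: "2 \<le> n" and sub: "subgroup H (Vgroup n)"
begin

lemma germ_comp_mem: "V_rep n g \<Longrightarrow> germ n f \<in> H \<Longrightarrow> germ n g \<in> H \<Longrightarrow> germ n (f \<circ> g) \<in> H"
  using subgroup.m_closed[OF sub] mult_Vgroup_germ by metis

lemma germ_inv_mem: "V_rep n f \<Longrightarrow> germ n f \<in> H \<Longrightarrow> germ n (inv f) \<in> H"
  using subgroup.m_inv_closed[OF sub] inv_Vgroup_germ[OF n] by metis

lemma germ_eq_mem: "germ_eq n f g \<Longrightarrow> germ n f \<in> H \<Longrightarrow> germ n g \<in> H"
  by (simp add: germ_eq_iff[symmetric])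

lemma germ_id_mem: "germ n id \<in> H"
  using subgroup.one_closed[OF sub] by (simp add: one_Vgroup)

lemma cone_swap_conj_mem:
  assumes g: "V_rep n g" "germ n g \<in> H" and xy: "x \<parallel> y" "x \<in> words n" "y \<in> words n"
    and s: "germ n (cone_swap n x y) \<in> H"
    and xy': "x' \<parallel> y'" "x' \<in> words n" "y' \<in> words n"
    and gx: "\<And>c. c \<in> words n \<Longrightarrow> k \<le> length c \<Longrightarrow> g (x @ c) = x' @ c"
    and gy: "\<And>c. c \<in> words n \<Longrightarrow> k \<le> length c \<Longrightarrow> g (y @ c) = y' @ c"
  shows "germ n (cone_swap n x' y') \<in> H"
proof -
  have "germ n (g \<circ> cone_swap n x y) \<in> H"
    using germ_comp_mem[OF V_rep_cone_swap[OF xy] g(2) s] .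
  then have "germ n (g \<circ> cone_swap n x y \<circ> inv g) \<in> H"
    using germ_comp_mem[OF V_rep_inv[OF g(1)] _ germ_inv_mem[OF g]] by blast
  then show ?thesis using germ_eq_mem cone_swap_conj_germ_eq[OF g(1) xy xy' gx gy] by blast
qed

text \<open>Every permutation of a finite antichain is a product of transpositions.\<close>
lemma cone_perm_mem:
  assumes fin: "finite A" and Aw: "A \<subseteq> words n" and anti: "prefix_antichain A"
    and swaps: "\<And>a b. a \<in> A \<Longrightarrow> b \<in> A \<Longrightarrow> a \<noteq> b \<Longrightarrow> germ n (cone_swap n a b) \<in> H"
    and \<pi>: "bij_betw \<pi> A A"
  shows "germ n (cone_perm n A \<pi>) \<in> H"
proof -
  define \<pi>' where "\<pi>' x = (if x \<in> A then \<pi> x else x)" for x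
  have "\<pi>' permutes A"
    using \<pi> by (intro bij_imp_permutes) (auto simp: \<pi>'_def cong: bij_betw_cong)
  from this fin have "germ n (cone_perm n A \<pi>') \<in> H"
  proof (induction rule: permutes_induct)
    case id
    then show ?case using germ_id_mem cone_perm_ident[OF anti] by (simp add: id_def)
  next
    case (swap a b p)
    have "cone_perm n A (Transposition.transpose a b \<circ> p)
        = cone_swap n a b \<circ> cone_perm n A p"
      using cone_perm_comp[OF anti Aw equalityD1[OF permutes_image[OF swap(4)]], symmetric]
        cone_perm_transpose[OF anti swap(1,2)] by (simp add: fun_eq_iff)
    moreover have "V_rep n (cone_perm n A p)"
      using V_rep_cone_perm[OF fin Aw anti permutes_imp_bij[OF swap(4)]] .
    ultimately have "germ n (cone_perm n A (Transposition.transpose a b \<circ> p)) \<in> H"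
      using germ_comp_mem swaps[OF swap(1-3)] swap(5) by simp
    then show ?case by (simp add: comp_def)
  qed
  moreover have "cone_perm n A \<pi>' = cone_perm n A \<pi>" by (rule cone_perm_cong[OF anti]) (simp add: \<pi>'_def)
  ultimately show ?thesis by simp
qed


lemma cone_swap_mem_if_children:
  assumes uv: "u \<parallel> v" "u \<in> words n" "v \<in> words n"
    and uu: "\<And>i j. i < n \<Longrightarrow> j < n \<Longrightarrow> i \<noteq> j \<Longrightarrow> germ n (cone_swap n (u @ [i]) (u @ [j])) \<in> H"
    and vv: "\<And>i j. i < n \<Longrightarrow> j < n \<Longrightarrow> i \<noteq> j \<Longrightarrow> germ n (cone_swap n (v @ [i]) (v @ [j])) \<in> H"
    and uv': "\<And>i j. i < n \<Longrightarrow> j < n \<Longrightarrow> germ n (cone_swap n (u @ [i]) (v @ [j])) \<in> H"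
  shows "germ n (cone_swap n u v) \<in> H"
proof -
  let ?A = "children n u \<union> children n v"
  have "germ n (cone_swap n a b) \<in> H" if "a \<in> ?A" "b \<in> ?A" "a \<noteq> b" for a b
  proof -
    from that(1,2) consider
        i j where "i < n" "j < n" "a = u @ [i]" "b = u @ [j]"
      | i j where "i < n" "j < n" "a = v @ [i]" "b = v @ [j]"
      | i j where "i < n" "j < n" "a = u @ [i]" "b = v @ [j]"
      | i j where "i < n" "j < n" "a = v @ [i]" "b = u @ [j]"
      by (auto simp: children_def)
    then show ?thesis
    proof cases
      case 4
      moreover have "cone_swap n a b = cone_swap n b a" by (rule cone_swap_commute)
      ultimately show ?thesis using uv'[of j i] by simp
    qed (use that(3) uu vv uv' in simp_all)
  qed
  moreover have "cone_swap n u v (u @ [i]) = v @ [i]" "cone_swap n u v (v @ [i]) = u @ [i]" if "i < n" for i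
    using cone_swap_left[OF uv(1)] cone_swap_right[OF uv(1)] uv(2,3) that by simp_all
  then have "bij_betw (cone_swap n u v) ?A ?A"
    by (intro bij_betw_byWitness[where f'="cone_swap n u v"]) (auto simp: children_def)
  moreover have "finite ?A" "?A \<subseteq> words n" using uv(2,3) by (auto simp: children_def)
  ultimately have "germ n (cone_perm n ?A (cone_swap n u v)) \<in> H"
    using cone_perm_mem children_prefix_antichain[OF uv(1)] by blast
  then show ?thesis using germ_eq_mem cone_swap_germ_eq_children[OF uv] by blast
qed

end


section \<open>The third level of the tree\<close>

text \<open>The words of length 3 read as base-\<open>n\<close> numerals, so that \<open>level n 3\<close> is enumerated in
  lexicographic order by \<open>word_of_index n 0, \<dots>, word_of_index n (n * n * n - 1)\<close>.\<close>
definition word_of_index :: "nat \<Rightarrow> nat \<Rightarrow> nat list" where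
  "word_of_index n k = [k div (n * n), k div n mod n, k mod n]"

definition index_of_word :: "nat \<Rightarrow> nat list \<Rightarrow> nat" where
  "index_of_word n w = w ! 0 * (n * n) + w ! 1 * n + w ! 2"

lemma index_of_word_of_index [simp]: "index_of_word n (word_of_index n k) = k"
proof -
  have "k div (n * n) * (n * n) + k div n mod n * n = (k div n div n * n + k div n mod n) * n"
    by (simp only: div_mult2_eq distrib_right mult.assoc)
  also have "\<dots> = k div n * n" by simp
  finally show ?thesis unfolding index_of_word_def word_of_index_def by simp
qed

lemma word_of_index_inj: "word_of_index n i = word_of_index n j \<Longrightarrow> i = j"
  by (metis index_of_word_of_index)

lemma word_of_index_level: "k < n * n * n \<Longrightarrow> word_of_index n k \<in> level n 3"
proof -
  assume k: "k < n * n * n"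
  then have "0 < n" by (cases n) auto
  moreover from this have "k div (n * n) < n"
    using k by (simp add: div_less_iff_less_mult mult.commute mult.left_commute)
  ultimately show ?thesis unfolding word_of_index_def level_def by (auto simp: words_def)
qed

lemma word_of_index_words: "k < n * n * n \<Longrightarrow> word_of_index n k \<in> words n"
  using word_of_index_level level_subset_words by blast

lemma word_of_index_parallel:
  "i < n * n * n \<Longrightarrow> j < n * n * n \<Longrightarrow> i \<noteq> j \<Longrightarrow> word_of_index n i \<parallel> word_of_index n j"
  using word_of_index_inj level_prefix_antichain word_of_index_level prefix_antichain_parallel by metis

lemma word_of_index_0_1:
  assumes "2 \<le> n"
  shows "word_of_index n 0 = [0, 0, 0]" "word_of_index n 1 = [0, 0, 1]"
proof -
  have "2 * 2 \<le> n * n" using mult_le_mono[OF assms assms] .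
  then show "word_of_index n 0 = [0, 0, 0]" "word_of_index n 1 = [0, 0, 1]"
    using assms by (simp_all add: word_of_index_def)
qed

lemma level_3_cases:
  assumes "w \<in> level n 3"
  obtains a b c where "w = [a, b, c]" "a < n" "b < n" "c < n"
proof -
  have "length w = 3" "set w \<subseteq> {..<n}" using assms by (auto simp: level_def words_def)
  then show ?thesis using that by (auto simp: length_Suc_conv numeral_3_eq_3)
qed

lemma index_of_word_digits: "w = [a, b, c] \<Longrightarrow> index_of_word n w = (a * n + b) * n + c"
  by (simp add: index_of_word_def algebra_simps)

lemma word_of_index_of_word [simp]:
  assumes "w \<in> level n 3"
  shows "word_of_index n (index_of_word n w) = w"
proof -
  obtain a b c where w: "w = [a, b, c]" "a < n" "b < n" "c < n" using level_3_cases[OF assms] .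
  have "index_of_word n w div n = a * n + b" "index_of_word n w mod n = c"
    using index_of_word_digits[OF w(1)] w by auto
  moreover have "(a * n + b) div n = a" "(a * n + b) mod n = b" using w by auto
  ultimately show ?thesis unfolding word_of_index_def w(1) by (simp add: div_mult2_eq)
qed

lemma index_of_word_less:
  assumes "w \<in> level n 3"
  shows "index_of_word n w < n * n * n"
proof -
  obtain a b c where w: "w = [a, b, c]" "a < n" "b < n" "c < n" using level_3_cases[OF assms] .
  have "a * n + b < (a + 1) * n" using w by simp
  also have "\<dots> \<le> n * n" using w by (intro mult_le_mono1) simp
  finally have ab: "a * n + b < n * n" .
  have "(a * n + b) * n + c < (a * n + b + 1) * n" using w by simp
  also have "\<dots> \<le> (n * n) * n" using ab by (intro mult_le_mono1) simp
  finally show ?thesis using index_of_word_digits[OF w(1)] by simp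
qed

text \<open>The two reflections of the index order, the second one fixing the last word. Their product
  is the shift \<open>k \<mapsto> k + 1\<close> (\<open>reflect_reflect'\<close>).\<close>
definition reflect :: "nat \<Rightarrow> nat list \<Rightarrow> nat list" where
  "reflect n w = word_of_index n (n * n * n - 1 - index_of_word n w)"

definition reflect' :: "nat \<Rightarrow> nat list \<Rightarrow> nat list" where
  "reflect' n w = (if index_of_word n w \<le> n * n * n - 2
     then word_of_index n (n * n * n - 2 - index_of_word n w) else w)"

lemma reflect_level: "w \<in> level n 3 \<Longrightarrow> reflect n w \<in> level n 3"
  unfolding reflect_def using index_of_word_less[of w n] by (intro word_of_index_level) simp

lemma reflect'_level: "w \<in> level n 3 \<Longrightarrow> reflect' n w \<in> level n 3"
  unfolding reflect'_def using index_of_word_less[of w n] by (auto intro: word_of_index_level)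

lemma reflect_reflect [simp]: "w \<in> level n 3 \<Longrightarrow> reflect n (reflect n w) = w"
  unfolding reflect_def using index_of_word_less[of w n] by simp

lemma reflect'_reflect' [simp]: "w \<in> level n 3 \<Longrightarrow> reflect' n (reflect' n w) = w"
proof -
  assume w: "w \<in> level n 3"
  then have "m - Suc (Suc (m - Suc (Suc (index_of_word n w)))) = index_of_word n w"
    if "index_of_word n w \<le> m - 2" "m = n * n * n" for m
    using index_of_word_less[OF w] that by linarith
  then show ?thesis unfolding reflect'_def using w by auto
qed

lemma reflect_reflect':
  assumes "Suc j < n * n * n"
  shows "reflect n (reflect' n (word_of_index n j)) = word_of_index n (Suc j)"
proof -
  have "j \<le> n * n * n - 2" using assms by linarith
  then have "reflect' n (word_of_index n j) = word_of_index n (n * n * n - 2 - j)"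
    unfolding reflect'_def by simp
  moreover have "n * n * n - 1 - (n * n * n - 2 - j) = Suc j" using assms by linarith
  ultimately show ?thesis unfolding reflect_def by simp
qed

lemma cone_perm_involution:
  assumes anti: "prefix_antichain A" and Aw: "A \<subseteq> words n" and \<pi>: "\<pi> ` A \<subseteq> A"
    and invol: "\<And>a. a \<in> A \<Longrightarrow> \<pi> (\<pi> a) = a"
  shows "cone_perm n A \<pi> \<circ> cone_perm n A \<pi> = id"
proof
  fix w
  have "cone_perm n A (\<pi> \<circ> \<pi>) = cone_perm n A (\<lambda>x. x)" by (rule cone_perm_cong[OF anti]) (simp add: invol)
  then show "(cone_perm n A \<pi> \<circ> cone_perm n A \<pi>) w = id w"
    using cone_perm_comp[OF anti Aw \<pi>] cone_perm_ident[OF anti] by simp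
qed

definition reflection :: "nat \<Rightarrow> nat list \<Rightarrow> nat list" where
  "reflection n = cone_perm n (level n 3) (reflect n)"

definition reflection' :: "nat \<Rightarrow> nat list \<Rightarrow> nat list" where
  "reflection' n = cone_perm n (level n 3) (reflect' n)"

lemma V_rep_reflection: "V_rep n (reflection n)"
  unfolding reflection_def using reflect_level reflect_reflect
  by (intro V_rep_cone_perm finite_level level_subset_words level_prefix_antichain
      bij_betw_byWitness[where f'="reflect n"]) auto

lemma V_rep_reflection': "V_rep n (reflection' n)"
  unfolding reflection'_def using reflect'_level reflect'_reflect'
  by (intro V_rep_cone_perm finite_level level_subset_words level_prefix_antichain
      bij_betw_byWitness[where f'="reflect' n"]) auto

lemma reflection_involution: "reflection n \<circ> reflection n = id"
  unfolding reflection_def using reflect_level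
  by (intro cone_perm_involution level_prefix_antichain level_subset_words) auto

lemma reflection'_involution: "reflection' n \<circ> reflection' n = id"
  unfolding reflection'_def using reflect'_level
  by (intro cone_perm_involution level_prefix_antichain level_subset_words) auto

lemma reflections_shift:
  assumes "Suc j < n * n * n" "g \<in> words n"
  shows "(reflection n \<circ> reflection' n) (word_of_index n j @ g) = word_of_index n (Suc j) @ g"
proof -
  have j: "word_of_index n j \<in> level n 3" using assms(1) by (intro word_of_index_level) simp
  then have "reflection' n (word_of_index n j @ g) = reflect' n (word_of_index n j) @ g"
    unfolding reflection'_def using assms(2) level_subset_words
    by (intro cone_perm_cone[OF level_prefix_antichain]) auto
  moreover have "reflection n (reflect' n (word_of_index n j) @ g)
      = reflect n (reflect' n (word_of_index n j)) @ g"
    unfolding reflection_def using reflect'_level[OF j] assms(2) level_subset_words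
    by (intro cone_perm_cone[OF level_prefix_antichain]) auto
  ultimately show ?thesis using reflect_reflect'[OF assms(1)] by simp
qed


locale V_subgroup_level3 = V_subgroup +
  assumes reflection_mem: "germ n (reflection n) \<in> H"
    and reflection'_mem: "germ n (reflection' n) \<in> H"
    and swap_000_001_mem: "germ n (cone_swap n [0, 0, 0] [0, 0, 1]) \<in> H"
begin

text \<open>Conjugating by the shift \<open>reflection n \<circ> reflection' n\<close> moves the swap of two consecutive
  words of the third level to the next such swap.\<close>
lemma adjacent_index_swap_mem:
  "Suc k < n * n * n \<Longrightarrow> germ n (cone_swap n (word_of_index n k) (word_of_index n (Suc k))) \<in> H"
proof (induction k)
  case 0
  then show ?case using swap_000_001_mem word_of_index_0_1[OF n] by simp
next
  case (Suc k)
  have shift: "V_rep n (reflection n \<circ> reflection' n)" "germ n (reflection n \<circ> reflection' n) \<in> H"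
    using V_rep_comp V_rep_reflection V_rep_reflection' germ_comp_mem reflection_mem reflection'_mem
    by blast+
  show ?case
  proof (rule cone_swap_conj_mem[OF shift _ _ _ Suc.IH, where k=0])
    fix c assume "c \<in> words n"
    then show "(reflection n \<circ> reflection' n) (word_of_index n k @ c) = word_of_index n (Suc k) @ c"
      and "(reflection n \<circ> reflection' n) (word_of_index n (Suc k) @ c)
        = word_of_index n (Suc (Suc k)) @ c"
      using reflections_shift Suc.prems by simp_all
  qed (use Suc.prems in \<open>auto intro: word_of_index_parallel word_of_index_words\<close>)
qed

lemma index_swap_mem: "i < j \<Longrightarrow> j < n * n * n \<Longrightarrow> germ n (cone_swap n (word_of_index n i) (word_of_index n j)) \<in> H"
proof (induction j)
  case (Suc j)
  show ?case
  proof (cases "i = j")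
    case True
    then show ?thesis using adjacent_index_swap_mem Suc.prems by simp
  next
    case False
    then have ij: "i < j" using Suc.prems by simp
    have V: "V_rep n (cone_swap n (word_of_index n j) (word_of_index n (Suc j)))"
      using Suc.prems by (intro V_rep_cone_swap word_of_index_parallel word_of_index_words) auto
    have G: "germ n (cone_swap n (word_of_index n j) (word_of_index n (Suc j))) \<in> H"
      using adjacent_index_swap_mem Suc.prems by simp
    show ?thesis
    proof (rule cone_swap_conj_mem[OF V G _ _ _ Suc.IH[OF ij], where k=0])
      fix c assume c: "c \<in> words n"
      show "cone_swap n (word_of_index n j) (word_of_index n (Suc j)) (word_of_index n i @ c)
          = word_of_index n i @ c"
        using ij Suc.prems by (intro cone_swap_parallel word_of_index_parallel) auto
      show "cone_swap n (word_of_index n j) (word_of_index n (Suc j)) (word_of_index n j @ c)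
          = word_of_index n (Suc j) @ c"
        using Suc.prems c by (intro cone_swap_left word_of_index_parallel) (auto intro: word_of_index_words)
    qed (use ij Suc.prems in \<open>auto intro: word_of_index_parallel word_of_index_words\<close>)
  qed
qed simp

lemma level_3_swap_mem:
  assumes u: "u \<in> level n 3" and v: "v \<in> level n 3" and uv: "u \<noteq> v"
  shows "germ n (cone_swap n u v) \<in> H"
proof -
  have idx: "u = word_of_index n (index_of_word n u)" "v = word_of_index n (index_of_word n v)"
    using u v by simp_all
  then have "index_of_word n u \<noteq> index_of_word n v" using uv by metis
  then consider "index_of_word n u < index_of_word n v" | "index_of_word n v < index_of_word n u"
    by linarith
  then show ?thesis
    using index_swap_mem index_of_word_less[OF u] index_of_word_less[OF v] idx cone_swap_commute
    by cases metis+
qed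

lemma level_3_perm_mem: "bij_betw \<pi> (level n 3) (level n 3) \<Longrightarrow> germ n (cone_perm n (level n 3) \<pi>) \<in> H"
  using cone_perm_mem[OF finite_level level_subset_words level_prefix_antichain] level_3_swap_mem
  by blast

end


lemma parallel_if_cone_images:
  assumes uv: "u \<parallel> v" and xy: "x \<in> words n" "y \<in> words n"
    and hx: "\<And>c. c \<in> words n \<Longrightarrow> h (x @ c) = u @ c"
    and hy: "\<And>c. c \<in> words n \<Longrightarrow> h (y @ c) = v @ c"
  shows "x \<parallel> y"
proof (rule parallelI)
  show "\<not> prefix x y"
  proof
    assume "prefix x y"
    then obtain d where "y = x @ d" by (auto simp: prefix_def)
    then have "v = u @ d" using xy hx[of d] hy[of "[]"] by simp
    then show False using uv by (simp add: parallel_def)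
  qed
  show "\<not> prefix y x"
  proof
    assume "prefix y x"
    then obtain d where "x = y @ d" by (auto simp: prefix_def)
    then have "u = v @ d" using xy hy[of d] hx[of "[]"] by simp
    then show False using uv by (simp add: parallel_def)
  qed
qed

lemma exists_short_parallel:
  assumes n: "2 \<le> n" and "a < n" "b < n" "v \<noteq> []"
  obtains q where "q \<in> words n" "length q \<le> 2" "q \<parallel> [a, b, c]" "q \<parallel> v"
proof (cases "hd v = a")
  case True
  let ?q = "[if a = 0 then 1 else 0]"
  have "?q \<parallel> [a, b, c]" "?q \<parallel> v" using True assms(4) by (auto simp: parallel_def neq_Nil_conv)
  then show ?thesis using that[of ?q] n by simp
next
  case False
  let ?q = "[a, if b = 0 then 1 else 0]"
  have "?q \<parallel> [a, b, c]" "?q \<parallel> v" using False assms(4) by (auto simp: parallel_def neq_Nil_conv)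
  then show ?thesis using that[of ?q] n assms(2) by simp
qed


section \<open>Generation of \<open>V\<^sub>n\<close>\<close>

locale V_subgroup_gen = V_subgroup_level3 +
  assumes swap_00_100_mem: "germ n (cone_swap n [0, 0] [1, 0, 0]) \<in> H"
begin

lemma level_3_mem: "length x = 3 \<Longrightarrow> x \<in> words n \<Longrightarrow> x \<in> level n 3"
  by (simp add: level_def)

lemma swap_mem_2_2:
  assumes uv: "u \<parallel> v" "u \<in> words n" "v \<in> words n" and "length u = 2" "length v = 2"
  shows "germ n (cone_swap n u v) \<in> H"
proof (rule cone_swap_mem_if_children[OF uv])
  have "u @ [i] \<noteq> v @ [j]" for i j using parallel_append[OF uv(1), of "[i]" "[j]"] by auto
  then show "germ n (cone_swap n (u @ [i]) (v @ [j])) \<in> H" if "i < n" "j < n" for i j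
    using assms that by (intro level_3_swap_mem level_3_mem) auto
qed (use assms in \<open>auto intro!: level_3_swap_mem level_3_mem\<close>)

lemma swap_mem_1_1:
  assumes uv: "u \<parallel> v" "u \<in> words n" "v \<in> words n" and "length u = 1" "length v = 1"
  shows "germ n (cone_swap n u v) \<in> H"
proof (rule cone_swap_mem_if_children[OF uv])
  show "germ n (cone_swap n (u @ [i]) (v @ [j])) \<in> H" if "i < n" "j < n" for i j
    using assms that by (intro swap_mem_2_2 parallel_append) auto
qed (use assms in \<open>auto intro!: swap_mem_2_2 not_equal_is_parallel\<close>)

text \<open>Conjugate the swap of \<open>[0, 0]\<close> and \<open>[1, 0, 0]\<close> by a permutation of the third level sending
  \<open>[0, 0, i]\<close> to \<open>u @ [i]\<close> and \<open>[1, 0, 0]\<close> to \<open>v\<close>.\<close>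
lemma swap_mem_2_3:
  assumes uv: "u \<parallel> v" "u \<in> words n" "v \<in> words n" and "length u = 2" "length v = 3"
  shows "germ n (cone_swap n u v) \<in> H"
proof -
  define X where "X = {[0, 0, i] | i. i < n} \<union> {[1, 0, 0]}"
  define f where "f x = (if x = [1, 0, 0] then v else u @ [last x])" for x :: "nat list"
  have "X \<subseteq> level n 3" "f ` X \<subseteq> level n 3" using n assms by (auto simp: X_def f_def level_def)
  moreover have "inj_on f X"
  proof (rule inj_onI)
    fix x y assume "x \<in> X" "y \<in> X" "f x = f y"
    moreover have "u @ [j] \<noteq> v" for j using uv(1) by (auto simp: parallel_def)
    ultimately show "x = y" unfolding X_def f_def by (auto split: if_splits)
  qed
  ultimately obtain \<pi> where \<pi>: "bij_betw \<pi> (level n 3) (level n 3)" and \<pi>f: "\<And>x. x \<in> X \<Longrightarrow> \<pi> x = f x"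
    using bij_betw_extend_perm[OF finite_level] by metis
  define g where "g = cone_perm n (level n 3) \<pi>"
  have g: "V_rep n g" "germ n g \<in> H" unfolding g_def
    using V_rep_cone_perm[OF finite_level level_subset_words level_prefix_antichain \<pi>]
      level_3_perm_mem[OF \<pi>] by auto
  have g_cone: "g (x @ c) = f x @ c" if "x \<in> X" "c \<in> words n" for x c
  proof -
    have "x \<in> level n 3" using that(1) n by (auto simp: X_def level_def)
    then show ?thesis unfolding g_def using that \<pi>f level_subset_words
      by (subst cone_perm_cone[OF level_prefix_antichain]) auto
  qed
  show ?thesis
  proof (rule cone_swap_conj_mem[OF g _ _ _ swap_00_100_mem uv, where k=1])
    show "[0, 0] \<parallel> [1, 0, 0::nat]" by (simp add: parallel_def)
    show "[0, 0] \<in> words n" "[1, 0, 0] \<in> words n" using n by auto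
    fix c assume c: "c \<in> words n" "1 \<le> length c"
    then obtain i c' where "c = i # c'" "i < n" "c' \<in> words n" by (cases c) auto
    then show "g ([0, 0] @ c) = u @ c" using g_cone[of "[0, 0, i]" c'] by (simp add: X_def f_def)
    show "g ([1, 0, 0] @ c) = v @ c" using g_cone[of "[1, 0, 0]" c] c by (simp add: X_def f_def)
  qed
qed

lemma swap_mem_1_2:
  assumes uv: "u \<parallel> v" "u \<in> words n" "v \<in> words n" and "length u = 1" "length v = 2"
  shows "germ n (cone_swap n u v) \<in> H"
proof (rule cone_swap_mem_if_children[OF uv])
  fix i j assume ij: "i < n" "j < n"
  show "germ n (cone_swap n (u @ [i]) (v @ [j])) \<in> H"
    using assms ij by (intro swap_mem_2_3 parallel_append) auto
  assume "i \<noteq> j"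
  then show "germ n (cone_swap n (u @ [i]) (u @ [j])) \<in> H"
    using assms ij by (intro swap_mem_2_2 not_equal_is_parallel) auto
  show "germ n (cone_swap n (v @ [i]) (v @ [j])) \<in> H"
    using assms ij \<open>i \<noteq> j\<close> by (intro level_3_swap_mem level_3_mem) auto
qed

text \<open>Conjugate the swap of \<open>w\<close> and \<open>v\<close> by the swap of \<open>u\<close> and \<open>w\<close>, where \<open>w\<close> is a word of length 2
  incomparable with both.\<close>
lemma swap_mem_1_3:
  assumes uv: "u \<parallel> v" "u \<in> words n" "v \<in> words n" and "length u = 1" "length v = 3"
  shows "germ n (cone_swap n u v) \<in> H"
proof -
  obtain a where a: "u = [a]" using assms(4) by (auto simp: length_Suc_conv)
  obtain v0 v1 v2 where vv: "v = [v0, v1, v2]" using assms(5) by (auto simp: length_Suc_conv numeral_3_eq_3)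
  define w where "w = [v0, if v1 = 0 then 1 else 0]"
  have w: "w \<in> words n" using n uv(3) vv by (auto simp: w_def)
  have uw: "u \<parallel> w" using uv(1) by (auto simp: a vv w_def parallel_def)
  have wv: "w \<parallel> v" by (auto simp: vv w_def parallel_def)
  show ?thesis
  proof (rule cone_swap_conj_mem[OF V_rep_cone_swap[OF wv w uv(3)] _ uw uv(2) w _ uv, where k=0])
    show "germ n (cone_swap n w v) \<in> H" using swap_mem_2_3[OF wv w uv(3)] assms(5) by (simp add: w_def)
    show "germ n (cone_swap n u w) \<in> H" using swap_mem_1_2[OF uw uv(2) w] assms(4) by (simp add: w_def)
    fix c assume "c \<in> words n"
    then show "cone_swap n w v (u @ c) = u @ c" "cone_swap n w v (w @ c) = v @ c"
      using cone_swap_parallel[OF uw uv(1)] cone_swap_left[OF wv] w by simp_all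
  qed
qed

lemma short_swap_mem_le:
  assumes uv: "u \<parallel> v" "u \<in> words n" "v \<in> words n" and "length u \<le> length v" "length v \<le> 3"
  shows "germ n (cone_swap n u v) \<in> H"
proof -
  have "length u \<noteq> 0" using uv(1) by auto
  then have "length u = 1 \<and> length v = 1 \<or> length u = 1 \<and> length v = 2 \<or> length u = 1 \<and> length v = 3
    \<or> length u = 2 \<and> length v = 2 \<or> length u = 2 \<and> length v = 3 \<or> length u = 3 \<and> length v = 3"
    using assms(4,5) by linarith
  then show ?thesis
  proof (elim disjE conjE)
    assume "length u = 3" "length v = 3"
    then show ?thesis using uv by (intro level_3_swap_mem level_3_mem) auto
  qed (use swap_mem_1_1[OF uv] swap_mem_1_2[OF uv] swap_mem_1_3[OF uv] swap_mem_2_2[OF uv]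
      swap_mem_2_3[OF uv] in simp_all)
qed

lemma short_swap_mem:
  assumes uv: "u \<parallel> v" "u \<in> words n" "v \<in> words n" and "length u \<le> 3" "length v \<le> 3"
  shows "germ n (cone_swap n u v) \<in> H"
proof (cases "length u \<le> length v")
  case False
  have "v \<parallel> u" using uv(1) by (simp add: parallel_commute)
  then have "germ n (cone_swap n v u) \<in> H" using short_swap_mem_le uv(2,3) assms(4) False by simp
  then show ?thesis by (simp add: cone_swap_commute)
qed (use short_swap_mem_le assms in simp)


text \<open>A swap of two cones one of which is deep is conjugate, by a swap of short cones, to a swap
  of cones whose depths have smaller sum.\<close>
lemma long_swap_reduce:
  assumes uv: "u \<parallel> v" "u \<in> words n" "v \<in> words n" and long: "4 \<le> length u"
    and IH: "\<And>u' v'. length u' + length v' < length u + length v \<Longrightarrow> u' \<parallel> v' \<Longrightarrow> u' \<in> words n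
      \<Longrightarrow> v' \<in> words n \<Longrightarrow> germ n (cone_swap n u' v') \<in> H"
  shows "germ n (cone_swap n u v) \<in> H"
proof -
  obtain a b c r where u: "u = [a, b, c] @ r"
    using long by (auto simp: Suc_le_length_iff numeral_eq_Suc)
  let ?P = "[a, b, c]"
  have abc: "a < n" "b < n" "c < n" "r \<in> words n" "length r \<ge> 1" using uv(2) long u by auto
  have "v \<noteq> []" using uv(1) by auto
  then obtain q where q: "q \<in> words n" "length q \<le> 2" "q \<parallel> ?P" "q \<parallel> v"
    using exists_short_parallel[OF n abc(1,2)] by blast
  have Pq: "?P \<parallel> q" using q(3) by (simp add: parallel_commute)
  have Pw: "?P \<in> words n" using abc by simp
  define u' where "u' = q @ r"
  define v' where "v' = (if prefix ?P v then q @ drop 3 v else v)"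
  have u'v': "u' \<in> words n" "v' \<in> words n" using q(1) abc uv(3) by (auto simp: u'_def v'_def words_drop)
  have shift_u: "cone_swap n ?P q (u' @ g) = u @ g" if "g \<in> words n" for g
    using cone_swap_right[OF Pq, of "r @ g" n] q(1) abc that by (simp add: u'_def u)
  have shift_v: "cone_swap n ?P q (v' @ g) = v @ g" if g: "g \<in> words n" for g
  proof (cases "prefix ?P v")
    case True
    then have "v = ?P @ drop 3 v" by (auto simp: prefix_def)
    then show ?thesis
      using cone_swap_right[OF Pq, of "drop 3 v @ g" n] True q(1) uv(3) g words_drop[of v n 3]
      by (simp add: v'_def)
  next
    case False
    moreover have "\<not> prefix v ?P"
    proof
      assume "prefix v ?P"
      moreover have "prefix ?P u" using u by simp
      ultimately have "prefix v u" by (rule prefix_order.trans)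
      then show False using uv(1) by (simp add: parallel_def)
    qed
    ultimately have "v \<parallel> ?P" by (simp add: parallel_def)
    then show ?thesis
      using False cone_swap_parallel q(4) by (simp add: v'_def parallel_commute)
  qed
  have "u' \<parallel> v'" using parallel_if_cone_images[OF uv(1) u'v' shift_u shift_v] .
  moreover have "length u' + length v' < length u + length v"
    using q(2) abc(5) prefix_length_le[of ?P v] by (auto simp: u'_def v'_def u)
  ultimately have "germ n (cone_swap n u' v') \<in> H" using IH u'v' by blast
  moreover have "germ n (cone_swap n ?P q) \<in> H" using short_swap_mem[OF Pq Pw q(1)] q(2) by simp
  ultimately show ?thesis
    by (intro cone_swap_conj_mem[OF V_rep_cone_swap[OF Pq Pw q(1)] _ \<open>u' \<parallel> v'\<close> u'v' _ uv, where k=0])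
      (simp_all add: shift_u shift_v)
qed

lemma cone_swap_mem: "u \<parallel> v \<Longrightarrow> u \<in> words n \<Longrightarrow> v \<in> words n \<Longrightarrow> germ n (cone_swap n u v) \<in> H"
proof (induction "length u + length v" arbitrary: u v rule: less_induct)
  case less
  show ?case
  proof (cases "length u \<le> 3 \<and> length v \<le> 3")
    case True
    then show ?thesis using short_swap_mem[OF less.prems] by simp
  next
    case long: False
    show ?thesis
    proof (cases "length v \<le> length u")
      case True
      then have "4 \<le> length u" using long by linarith
      then show ?thesis using long_swap_reduce[OF less.prems] less.hyps by blast
    next
      case False
      then have "4 \<le> length v" using long by linarith
      moreover have "v \<parallel> u" using less.prems(1) by (simp add: parallel_commute)
      ultimately have "germ n (cone_swap n v u) \<in> H"
        using long_swap_reduce[of v u] less.prems(2,3) less.hyps by (simp add: add.commute)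
      then show ?thesis by (simp add: cone_swap_commute)
    qed
  qed
qed

lemma V_rep_mem:
  assumes f: "V_rep n f"
  shows "germ n f \<in> H"
proof -
  obtain v where v: "v \<in> V_maps n" "germ_eq n f v" using V_rep_germ_eq_V_map[OF f] n by auto
  then obtain \<tau>0 \<tau>1 b where tb: "v = pmap n \<tau>0 b" "is_tree n \<tau>0" "is_tree n \<tau>1"
    "bij_betw b (leaves n \<tau>0) (leaves n \<tau>1)" unfolding V_maps_def by blast
  let ?P = "\<lambda>h. V_rep n h \<and> germ n h \<in> H"
  have "\<exists>h. ?P h \<and> (\<forall>l\<in>leaves n \<tau>0. \<forall>g\<in>words n. h (l @ g) = b l @ g)"
  proof (rule tree_pair_realized[of n ?P, OF n _ _ _ _ _ tb(2-4)])
    show "?P id" using V_rep_id germ_id_mem by simp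
    show "?P (f \<circ> g)" if "?P f" "?P g" for f g using that V_rep_comp germ_comp_mem by simp
    show "?P (inv f)" if "?P f" for f using that V_rep_inv germ_inv_mem by simp
    show "?P (cone_perm n A \<pi>)" if "finite A" "A \<subseteq> words n" "prefix_antichain A" "bij_betw \<pi> A A" for A \<pi>
    proof
      show "V_rep n (cone_perm n A \<pi>)" using V_rep_cone_perm that .
      show "germ n (cone_perm n A \<pi>) \<in> H"
        by (rule cone_perm_mem[OF that(1-3) _ that(4)])
          (use that in \<open>auto intro: cone_swap_mem prefix_antichain_parallel\<close>)
    qed
  qed simp
  then obtain h where h: "V_rep n h" "germ n h \<in> H" "\<And>l g. l \<in> leaves n \<tau>0 \<Longrightarrow> g \<in> words n \<Longrightarrow> h (l @ g) = b l @ g"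
    by blast
  have "germ_eq n h v" using germ_eq_sym[OF pmap_germ_eq[OF tb(2) h(3)]] tb(1) by simp
  then have "germ_eq n h f" using germ_eq_trans germ_eq_sym[OF v(2)] by blast
  then show ?thesis using germ_eq_mem h(2) by blast
qed

end


lemma cone_perm_germ_neq_id:
  assumes n: "0 < n" and anti: "prefix_antichain A" and Aw: "A \<subseteq> words n" and a: "a \<in> A"
    and moved: "\<pi> a \<noteq> a"
  shows "germ n (cone_perm n A \<pi>) \<noteq> germ n id"
proof
  assume "germ n (cone_perm n A \<pi>) = germ n id"
  then have fin: "finite {w \<in> words n. cone_perm n A \<pi> w \<noteq> id w}" by (simp add: germ_eq_iff germ_eq_def)
  let ?f = "\<lambda>k. a @ replicate k (0::nat)"
  have "range ?f \<subseteq> {w \<in> words n. cone_perm n A \<pi> w \<noteq> id w}"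
  proof
    fix w assume "w \<in> range ?f"
    then obtain k where k: "w = ?f k" by auto
    then have w: "w \<in> words n" using a Aw n replicate_zero_words by auto
    then have "cone_perm n A \<pi> w = \<pi> a @ replicate k 0" using k cone_perm_cone[OF anti a] by simp
    then show "w \<in> {w \<in> words n. cone_perm n A \<pi> w \<noteq> id w}" using moved k w by simp
  qed
  moreover have "inj ?f" by (rule injI) simp
  ultimately show False using finite_subset[OF _ fin] finite_imageD by (metis infinite_UNIV_nat)
qed

lemma cone_swap_germ_neq_id:
  "0 < n \<Longrightarrow> u \<parallel> v \<Longrightarrow> u \<in> words n \<Longrightarrow> v \<in> words n \<Longrightarrow> germ n (cone_swap n u v) \<noteq> germ n id"
  unfolding cone_swap_def
  by (rule cone_perm_germ_neq_id) (auto simp: parallel_prefix_antichain parallel_def)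

lemma generators_involutive:
  assumes n: "2 \<le> n"
    and f: "f \<in> {reflection n, reflection' n, cone_swap n [0, 0, 0] [0, 0, 1], cone_swap n [0, 0] [1, 0, 0]}"
  shows "V_rep n f \<and> f \<circ> f = id \<and> germ n f \<noteq> germ n id"
proof -
  have n0: "0 < n" using n by simp
  have "2 * 2 * 2 \<le> n * n * n" using mult_le_mono[OF mult_le_mono[OF n n] n] .
  then have "n * n * n - 1 \<noteq> 0" "n * n * n - 2 \<noteq> 0" by linarith+
  moreover have "index_of_word n [0, 0, 0] = 0" by (simp add: index_of_word_def)
  ultimately have "reflect n [0, 0, 0] = word_of_index n (n * n * n - 1)"
    "reflect' n [0, 0, 0] = word_of_index n (n * n * n - 2)"
    by (simp_all add: reflect_def reflect'_def)
  then have "reflect n [0, 0, 0] \<noteq> [0, 0, 0]" "reflect' n [0, 0, 0] \<noteq> [0, 0, 0]"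
    using \<open>n * n * n - 1 \<noteq> 0\<close> \<open>n * n * n - 2 \<noteq> 0\<close> word_of_index_0_1(1)[OF n]
      word_of_index_inj[of n _ 0] by metis+
  moreover have "[0, 0, 0] \<in> level n 3" using n0 by (simp add: level_def)
  ultimately have "germ n (reflection n) \<noteq> germ n id" "germ n (reflection' n) \<noteq> germ n id"
    unfolding reflection_def reflection'_def
    using cone_perm_germ_neq_id[OF n0 level_prefix_antichain level_subset_words] by blast+
  moreover have "[0, 0, 0] \<parallel> [0, 0, 1::nat]" "[0, 0] \<parallel> [1, 0, 0::nat]" by (simp_all add: parallel_def)
  moreover have "[0, 0, 0] \<in> words n" "[0, 0, 1] \<in> words n" "[0, 0] \<in> words n" "[1, 0, 0] \<in> words n"
    using n by auto
  ultimately show ?thesis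
    using f V_rep_reflection V_rep_reflection' reflection_involution reflection'_involution
      V_rep_cone_swap cone_swap_involution cone_swap_germ_neq_id[OF n0] by auto
qed

lemma Vgroup_generated:
  assumes n: "2 \<le> n"
  defines "S \<equiv> germ n ` {reflection n, reflection' n, cone_swap n [0, 0, 0] [0, 0, 1], cone_swap n [0, 0] [1, 0, 0]}"
  shows "generate (Vgroup n) S = carrier (Vgroup n)"
proof -
  interpret group "Vgroup n" by (rule group_Vgroup[OF n])
  have S: "S \<subseteq> carrier (Vgroup n)"
    using germ_in_carrier[OF n] generators_involutive[OF n] by (auto simp: S_def)
  have "germ n (reflection n) \<in> generate (Vgroup n) S" "germ n (reflection' n) \<in> generate (Vgroup n) S"
    "germ n (cone_swap n [0, 0, 0] [0, 0, 1]) \<in> generate (Vgroup n) S"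
    "germ n (cone_swap n [0, 0] [1, 0, 0]) \<in> generate (Vgroup n) S"
    by (auto intro: generate.incl simp: S_def)
  then have "V_subgroup_gen n (generate (Vgroup n) S)"
    by (simp add: V_subgroup_gen_def V_subgroup_level3_def V_subgroup_def V_subgroup_gen_axioms_def
        V_subgroup_level3_axioms_def n generate_is_subgroup[OF S])
  then interpret V_subgroup_gen n "generate (Vgroup n) S" .
  have "carrier (Vgroup n) \<subseteq> generate (Vgroup n) S"
    using carrier_Vgroup[OF n] V_rep_mem by auto
  then show ?thesis using generate_incl[OF S] by blast
qed

theorem theorem4p1:
  fixes n :: nat
  assumes "n \<ge> 2"
  shows "group (Vgroup n) \<and>
    (\<exists>a b c d. {a, b, c, d} \<subseteq> carrier (Vgroup n)
       \<and> (\<forall>x\<in>{a, b, c, d}. x \<noteq> \<one>\<^bsub>Vgroup n\<^esub> \<and> x \<otimes>\<^bsub>Vgroup n\<^esub> x = \<one>\<^bsub>Vgroup n\<^esub>)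
       \<and> generate (Vgroup n) {a, b, c, d} = carrier (Vgroup n))"
proof -
  let ?gens = "{reflection n, reflection' n, cone_swap n [0, 0, 0] [0, 0, 1], cone_swap n [0, 0] [1, 0, 0]}"
  have "germ n f \<in> carrier (Vgroup n) \<and> germ n f \<noteq> \<one>\<^bsub>Vgroup n\<^esub>
      \<and> germ n f \<otimes>\<^bsub>Vgroup n\<^esub> germ n f = \<one>\<^bsub>Vgroup n\<^esub>" if "f \<in> ?gens" for f
    using generators_involutive[OF assms that] germ_in_carrier[OF assms] mult_Vgroup_germ one_Vgroup
    by simp
  then show ?thesis
    using group_Vgroup[OF assms] Vgroup_generated[OF assms]
    by (intro conjI exI[of _ "germ n (reflection n)"] exI[of _ "germ n (reflection' n)"]
        exI[of _ "germ n (cone_swap n [0, 0, 0] [0, 0, 1])"] exI[of _ "germ n (cone_swap n [0, 0] [1, 0, 0])"])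
      auto
qed

end
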